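(* (1) Let $\alpha_1,\ldots,\alpha_m\in(0,1)$ with $\sum_{i=1}^m\alpha_i<1$. An integrable function $f:[0,1]^m\to\mathbb{C}$ satisfies $\int_{A_1\times\cdots\times A_m}f=0$ for all pairwise disjoint measurable $A_1,\ldots,A_m\subseteq[0,1]$ with $\lambda(A_i)=\alpha_i$ if and only if $f=0$ almost everywhere. (2) The same equivalence holds if instead $f$ is symmetric (invariant under all permutations of its $m$ coordinates), $\sum_{i=1}^m\alpha_i=1$, and $(\alpha_1,\ldots,\alpha_m)\ne(1/m,\ldots,1/m)$.
   Context: $\lambda$ denotes Lebesgue measure on $[0,1]$. *)

theory Defs
  imports "HOL-Analysis.Analysis" "HOL-Combinatorics.Permutations"
begin

definition unit_cube :: "nat \<Rightarrow> (nat \<Rightarrow> real) measure" where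
  "unit_cube m = PiM {..<m} (\<lambda>_. lebesgue_on {0..1})"

definition vanishes_on_disjoint_boxes ::
    "nat \<Rightarrow> (nat \<Rightarrow> real) \<Rightarrow> ((nat \<Rightarrow> real) \<Rightarrow> complex) \<Rightarrow> bool" where
  "vanishes_on_disjoint_boxes m \<alpha> f \<longleftrightarrow>
     (\<forall>A :: nat \<Rightarrow> real set.
        (\<forall>i<m. A i \<in> sets (lebesgue_on {0..1}) \<and> measure (lebesgue_on {0..1}) (A i) = \<alpha> i) \<and>
        (\<forall>i<m. \<forall>j<m. i \<noteq> j \<longrightarrow> A i \<inter> A j = {}) \<longrightarrow>
        (\<integral>x\<in>(\<Pi>\<^sub>E i\<in>{..<m}. A i). f x \<partial>unit_cube m) = 0)"

end

theory Submission
  imports Defs "HOL-Probability.Probability"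
begin

text \<open>Write \<open>\<Phi>(A\<^sub>1, \<dots>, A\<^sub>m)\<close> for the integral of \<open>f\<close> over \<open>A\<^sub>1 \<times> \<dots> \<times> A\<^sub>m\<close>; it is additive and
  absolutely continuous in each side.  As a function of one side \<open>Y\<close> ranging over a set \<open>W\<close>,
  such a set function is proportional to \<open>\<lambda>\<close> as soon as it is constant on the subsets of \<open>W\<close> of
  one measure \<open>a < \<lambda>(W)\<close> (Cauchy's functional equation), and then it vanishes if it vanishes there.

  (1) If \<open>\<Sum> \<alpha>\<^sub>i < 1\<close>, the sides of a vanishing \<open>\<alpha>\<close>-box can be replaced one at a time by arbitrary
  disjoint sides of measure \<open>\<le> \<delta>\<close>, since the other sides always leave room of measure \<open>> \<alpha>\<^sub>k\<close>.
  (2) If \<open>\<Sum> \<alpha>\<^sub>i = 1\<close> there is no room left; for symmetric \<open>f\<close> one inducts on \<open>m\<close>, freeing the last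
  side inside the complement of the others.  The case \<open>m = 2\<close> uses \<open>\<alpha>\<^sub>1 \<noteq> \<alpha>\<^sub>2\<close>: exchanging
  small pieces between the two sides shows that \<open>\<Phi>(\<cdot>, T)\<close> vanishes on subsets of the complement
  of \<open>T\<close>.

  In both cases \<open>\<Phi>\<close> vanishes on disjoint boxes with small sides.  Cutting any box along a fine
  grid, the cells that are not such boxes lie near the diagonal, a set of small measure; so \<open>\<Phi>\<close>
  vanishes on all boxes, hence \<open>\<integral>\<^sub>Z f = 0\<close> for all measurable \<open>Z\<close>, and \<open>f = 0\<close> a.e.\<close>

section \<open>Lebesgue measure on the unit interval\<close>

abbreviation L01 :: "real measure" where "L01 \<equiv> lebesgue_on {0..1}"
abbreviation vol :: "real set \<Rightarrow> real" where "vol A \<equiv> measure L01 A"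

lemma sets_L01_iff: "A \<in> sets L01 \<longleftrightarrow> A \<subseteq> {0..1} \<and> A \<in> sets lebesgue"
  by (simp add: sets_restrict_space_iff)

lemma sets_L01_subset: "A \<in> sets L01 \<Longrightarrow> A \<subseteq> {0..1}"
  by (simp add: sets_L01_iff)

lemma prob_space_L01: "prob_space L01"
  by (rule prob_spaceI) (simp add: emeasure_restrict_space)

interpretation L01: prob_space L01 by (rule prob_space_L01)

lemma sets_L01_Int_borel: "A \<in> sets L01 \<Longrightarrow> B \<in> sets borel \<Longrightarrow> A \<inter> B \<in> sets L01"
  by (auto simp: sets_L01_iff sets_completionI_sets)

lemma unit_interval_in_sets_L01: "{0..1} \<in> sets L01"
  using sets.top[of L01] by simp

lemma vol_Diff_ge: "A \<in> sets L01 \<Longrightarrow> B \<in> sets L01 \<Longrightarrow> vol A - vol B \<le> vol (A - B)"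
  using L01.finite_measure_Diff'[of A B] L01.finite_measure_mono[of "A \<inter> B" B] by auto

lemma vol_Diff_UN_ge:
  assumes "V \<in> sets L01" "finite I" "\<And>i. i \<in> I \<Longrightarrow> B i \<in> sets L01"
  shows "vol V - (\<Sum>i\<in>I. vol (B i)) \<le> vol (V - (\<Union>i\<in>I. B i))"
proof -
  have "vol V - vol (\<Union>i\<in>I. B i) \<le> vol (V - (\<Union>i\<in>I. B i))"
    using assms by (intro vol_Diff_ge) auto
  moreover have "vol (\<Union>i\<in>I. B i) \<le> (\<Sum>i\<in>I. vol (B i))"
    using measure_UNION_le[of I B L01] assms by blast
  ultimately show ?thesis by linarith
qed

lemma vol_le_interval_length:
  assumes "A \<in> sets L01" "A \<subseteq> {x..y}" "x \<le> y"
  shows "vol A \<le> y - x"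
proof -
  have "A \<in> lmeasurable"
    using assms(1) fmeasurableI2[OF lmeasurable_interval(1)[of 0 1], of A] by (simp add: sets_L01_iff)
  then have "measure lebesgue A \<le> measure lebesgue {x..y}"
    using assms(2) by (intro measure_mono_fmeasurable) auto
  then show ?thesis
    using assms by (simp add: measure_restrict_space sets_L01_iff measure_completion)
qed

text \<open>The map \<open>x \<mapsto> vol (S \<inter> {..x})\<close> is 1-Lipschitz, so by the intermediate value theorem
  it takes every value between \<open>0\<close> and \<open>vol S\<close>.\<close>
lemma exists_subset_vol:
  assumes S: "S \<in> sets L01" and t: "0 \<le> t" "t \<le> vol S"
  obtains B where "B \<in> sets L01" "B \<subseteq> S" "vol B = t"
proof -
  define F where "F x = vol (S \<inter> {..x})" for x
  have Sx: "S \<inter> {..x} \<in> sets L01" for x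
    using S by (simp add: sets_L01_Int_borel)
  have F_mono_lip: "0 \<le> F y - F x \<and> F y - F x \<le> y - x" if "x \<le> y" for x y
  proof -
    have I: "S \<inter> {x<..y} \<in> sets L01"
      using S by (simp add: sets_L01_Int_borel)
    have "S \<inter> {..y} = (S \<inter> {..x}) \<union> (S \<inter> {x<..y})" using that by auto
    then have "F y = F x + vol (S \<inter> {x<..y})"
      unfolding F_def using I Sx by (subst L01.finite_measure_Union[symmetric]) auto
    moreover have "vol (S \<inter> {x<..y}) \<le> y - x"
      using I that by (intro vol_le_interval_length) auto
    ultimately show ?thesis by simp
  qed
  have "continuous_on {0..1} F"
  proof (rule continuous_onI)
    fix x e :: real assume "0 < e"
    show "\<exists>d>0. \<forall>x'\<in>{0..1}. dist x' x < d \<longrightarrow> dist (F x') (F x) \<le> e"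
      using F_mono_lip[of x] F_mono_lip[of _ x] \<open>0 < e\<close>
      by (intro exI[of _ e]) (smt (verit, best) dist_real_def)
  qed
  moreover have "F 0 \<le> t"
  proof -
    have "F 0 \<le> 0 - 0"
      unfolding F_def by (rule vol_le_interval_length[OF Sx]) (use S in \<open>auto simp: sets_L01_iff\<close>)
    then show ?thesis using t by simp
  qed
  moreover have "t \<le> F 1"
    unfolding F_def using t S by (simp add: sets_L01_iff Int_absorb2 subset_eq)
  ultimately obtain x where "F x = t"
    using IVT'[of F 0 t 1] by auto
  then show ?thesis using that Sx unfolding F_def by blast
qed

lemma additive_dyadic_multiple:
  fixes \<phi> :: "real \<Rightarrow> 'a::real_normed_vector"
  assumes h: "h > 0"
    and add: "\<And>s t. 0 \<le> s \<Longrightarrow> 0 \<le> t \<Longrightarrow> s + t \<le> h \<Longrightarrow> \<phi> (s + t) = \<phi> s + \<phi> t"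
    and k: "real k / 2 ^ n \<le> 1"
  shows "\<phi> (real k / 2 ^ n * h) = (real k / 2 ^ n) *\<^sub>R \<phi> h"
proof -
  define u where "u = h / 2 ^ n"
  have u: "u > 0" using h by (simp add: u_def)
  have multiple: "\<phi> (real j * u) = real j *\<^sub>R \<phi> u" if "real j * u \<le> h" for j
    using that
  proof (induction j)
    case 0
    show ?case using add[of 0 0] h by simp
  next
    case (Suc j)
    have split: "real (Suc j) * u = real j * u + u" by (simp add: algebra_simps)
    then have le: "real j * u \<le> h" using Suc.prems u by simp
    have "\<phi> (real (Suc j) * u) = \<phi> (real j * u) + \<phi> u"
      unfolding split using Suc.prems[unfolded split] u le by (intro add) auto
    then show ?case using Suc.IH[OF le] by (simp add: algebra_simps)
  qed
  have "\<phi> h = (2 ^ n) *\<^sub>R \<phi> u"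
    using multiple[of "2 ^ n"] h by (simp add: u_def)
  moreover have "real k * u \<le> h" using k h by (simp add: u_def field_simps)
  ultimately show ?thesis
    using multiple[of k] by (simp add: u_def field_simps)
qed

text \<open>Approximate \<open>s\<close> from below by a dyadic multiple of \<open>h\<close>; the remainder is small by
  continuity at \<open>0\<close>.\<close>
lemma additive_continuous_at_0_linear:
  fixes \<phi> :: "real \<Rightarrow> 'a::real_normed_vector"
  assumes h: "h > 0"
    and add: "\<And>s t. 0 \<le> s \<Longrightarrow> 0 \<le> t \<Longrightarrow> s + t \<le> h \<Longrightarrow> \<phi> (s + t) = \<phi> s + \<phi> t"
    and cont: "\<And>e. e > 0 \<Longrightarrow> \<exists>d>0. \<forall>s. 0 \<le> s \<and> s < d \<longrightarrow> norm (\<phi> s) < e"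
    and s: "0 \<le> s" "s \<le> h"
  shows "\<phi> s = (s / h) *\<^sub>R \<phi> h"
proof -
  have "norm (\<phi> s - (s / h) *\<^sub>R \<phi> h) < 2 * e" if e: "e > 0" for e
  proof -
    obtain d where d: "d > 0" "\<And>r. 0 \<le> r \<Longrightarrow> r < d \<Longrightarrow> norm (\<phi> r) < e"
      using cont[OF e] by blast
    obtain n where n: "h / d < 2 ^ n" "norm (\<phi> h) / e < 2 ^ n"
      using real_arch_pow[of 2 "max (h / d) (norm (\<phi> h) / e)"] by auto
    define k where "k = nat \<lfloor>s / h * 2 ^ n\<rfloor>"
    define q where "q = real k / 2 ^ n"
    define r where "r = s - q * h"
    have "real k \<le> s / h * 2 ^ n" "s / h * 2 ^ n < real k + 1"
      using s h by (simp_all add: k_def)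
    then have q: "q \<le> s / h" "s / h < q + 1 / 2 ^ n"
      by (simp_all add: q_def field_simps)
    have q_le_1: "q \<le> 1" using q(1) divide_le_eq_1_pos[OF h, of s] s by linarith
    have r: "0 \<le> r" "r < h / 2 ^ n"
      using q h by (simp_all add: r_def field_simps)
    have "\<phi> s = \<phi> (q * h) + \<phi> r"
      using add[of "q * h" r] r s h by (simp add: r_def q_def)
    also have "\<phi> (q * h) = q *\<^sub>R \<phi> h"
      unfolding q_def by (rule additive_dyadic_multiple[OF h add q_le_1[unfolded q_def]])
    finally have "\<phi> s - (s / h) *\<^sub>R \<phi> h = \<phi> r - (r / h) *\<^sub>R \<phi> h"
      using h by (simp add: r_def algebra_simps diff_divide_distrib scaleR_diff_left)
    moreover have "h / 2 ^ n < d" using n(1) d(1) by (simp add: field_simps)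
    then have "norm (\<phi> r) < e" using d(2) r by simp
    moreover have "norm ((r / h) *\<^sub>R \<phi> h) \<le> norm (\<phi> h) / 2 ^ n"
    proof -
      have "r / h \<le> 1 / 2 ^ n" using r h by (simp add: field_simps)
      then show ?thesis using mult_right_mono[OF _ norm_ge_zero[of "\<phi> h"]] r h by fastforce
    qed
    moreover have "norm (\<phi> h) / 2 ^ n < e" using n(2) e by (simp add: field_simps)
    ultimately show ?thesis using norm_triangle_ineq4[of "\<phi> r" "(r / h) *\<^sub>R \<phi> h"] by simp
  qed
  from this[of "norm (\<phi> s - (s / h) *\<^sub>R \<phi> h) / 2"] show ?thesis
    by (cases "\<phi> s = (s / h) *\<^sub>R \<phi> h") auto
qed

section \<open>Additive set functions\<close>

locale vol_additive =
  fixes W :: "real set" and \<psi> :: "real set \<Rightarrow> 'a::real_normed_vector"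
  assumes W: "W \<in> sets L01"
    and additive: "\<And>S T. S \<in> sets L01 \<Longrightarrow> T \<in> sets L01 \<Longrightarrow> S \<subseteq> W \<Longrightarrow> T \<subseteq> W \<Longrightarrow> S \<inter> T = {}
      \<Longrightarrow> \<psi> (S \<union> T) = \<psi> S + \<psi> T"
    and small: "\<And>e. e > 0 \<Longrightarrow> \<exists>d>0. \<forall>S\<in>sets L01. S \<subseteq> W \<longrightarrow> vol S < d \<longrightarrow> norm (\<psi> S) < e"
begin

text \<open>Pad \<open>B\<close> and \<open>B'\<close> by a common set \<open>D\<close>, disjoint from both, up to measure \<open>a\<close>.\<close>
lemma level_constant_below:
  assumes level: "\<And>Y Y'. Y \<in> sets L01 \<Longrightarrow> Y' \<in> sets L01 \<Longrightarrow> Y \<subseteq> W \<Longrightarrow> Y' \<subseteq> W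
      \<Longrightarrow> vol Y = a \<Longrightarrow> vol Y' = a \<Longrightarrow> \<psi> Y = \<psi> Y'"
    and B: "B \<in> sets L01" "B \<subseteq> W" and B': "B' \<in> sets L01" "B' \<subseteq> W"
    and vol: "vol B' = vol B" "vol B \<le> a" "vol B \<le> vol W - a"
  shows "\<psi> B = \<psi> B'"
proof -
  have "vol W - vol (B \<union> B') \<le> vol (W - (B \<union> B'))" using W B B' by (intro vol_Diff_ge) auto
  moreover have "vol (B \<union> B') \<le> 2 * vol B" using measure_Un_le[of B L01 B'] B B' vol by simp
  ultimately obtain D where D: "D \<in> sets L01" "D \<subseteq> W - (B \<union> B')" "vol D = a - vol B"
    using exists_subset_vol[of "W - (B \<union> B')" "a - vol B"] W B B' vol by auto
  have disj: "B \<inter> D = {}" "B' \<inter> D = {}" using D by auto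
  have "\<psi> (B \<union> D) = \<psi> (B' \<union> D)"
    using D B B' vol disj by (intro level) (auto simp: L01.finite_measure_Union)
  moreover have "\<psi> (B \<union> D) = \<psi> B + \<psi> D" "\<psi> (B' \<union> D) = \<psi> B' + \<psi> D"
    using D B B' by (auto intro!: additive)
  ultimately show ?thesis by simp
qed

text \<open>Such a \<open>\<psi>\<close> factors as \<open>\<phi> \<circ> vol\<close> with \<open>\<phi>\<close> additive and continuous at \<open>0\<close>, hence linear.\<close>
lemma proportional_below:
  assumes g: "0 < g" "g \<le> vol W"
    and depends_on_vol: "\<And>B B'. B \<in> sets L01 \<Longrightarrow> B' \<in> sets L01 \<Longrightarrow> B \<subseteq> W \<Longrightarrow> B' \<subseteq> W
      \<Longrightarrow> vol B' = vol B \<Longrightarrow> vol B \<le> g \<Longrightarrow> \<psi> B = \<psi> B'"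
  obtains c where "\<And>S. S \<in> sets L01 \<Longrightarrow> S \<subseteq> W \<Longrightarrow> vol S \<le> g \<Longrightarrow> \<psi> S = vol S *\<^sub>R c"
proof -
  have exists_level: "\<exists>B. B \<in> sets L01 \<and> B \<subseteq> W \<and> vol B = s" if s: "0 \<le> s" "s \<le> g" for s
  proof -
    have "s \<le> vol W" using s g by linarith
    then obtain B where "B \<in> sets L01" "B \<subseteq> W" "vol B = s"
      using exists_subset_vol[OF W s(1)] by blast
    then show ?thesis by blast
  qed
  define \<phi> where "\<phi> s = \<psi> (SOME B. B \<in> sets L01 \<and> B \<subseteq> W \<and> vol B = s)" for s
  have \<psi>_\<phi>: "\<psi> B = \<phi> (vol B)" if "B \<in> sets L01" "B \<subseteq> W" "vol B \<le> g" for B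
    using someI_ex[OF exists_level[OF _ that(3)]] that unfolding \<phi>_def
    by (intro depends_on_vol) auto
  have linear: "\<phi> s = (s / g) *\<^sub>R \<phi> g" if "0 \<le> s" "s \<le> g" for s
  proof (rule additive_continuous_at_0_linear[OF g(1) _ _ that])
    fix s t :: real assume st: "0 \<le> s" "0 \<le> t" "s + t \<le> g"
    obtain B where B: "B \<in> sets L01" "B \<subseteq> W" "vol B = s" using exists_level[of s] st by auto
    have "t \<le> vol (W - B)" using L01.finite_measure_Diff[OF W B(1)] W B st g by simp
    then obtain C where C: "C \<in> sets L01" "C \<subseteq> W - B" "vol C = t"
      using exists_subset_vol[of "W - B" t] W B st by auto
    have "B \<inter> C = {}" "C \<subseteq> W" using C by auto
    then have "vol (B \<union> C) = s + t" using B C by (simp add: L01.finite_measure_Union)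
    then have "\<phi> (s + t) = \<psi> (B \<union> C)" using B C st \<psi>_\<phi>[of "B \<union> C"] \<open>C \<subseteq> W\<close> by auto
    also have "\<dots> = \<psi> B + \<psi> C" using B C by (intro additive) auto
    also have "\<dots> = \<phi> s + \<phi> t" using B C st by (subst (1 2) \<psi>_\<phi>) auto
    finally show "\<phi> (s + t) = \<phi> s + \<phi> t" .
  next
    fix e :: real assume "e > 0"
    then obtain d where d: "d > 0" "\<forall>S\<in>sets L01. S \<subseteq> W \<longrightarrow> vol S < d \<longrightarrow> norm (\<psi> S) < e"
      using small by blast
    show "\<exists>d>0. \<forall>s. 0 \<le> s \<and> s < d \<longrightarrow> norm (\<phi> s) < e"
    proof (intro exI[of _ "min d g"] conjI allI impI)
      fix s assume s: "0 \<le> s \<and> s < min d g"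
      then obtain B where "B \<in> sets L01" "B \<subseteq> W" "vol B = s" using exists_level[of s] by auto
      with d s \<psi>_\<phi>[of B] show "norm (\<phi> s) < e" by auto
    qed (use d g in auto)
  qed
  show ?thesis
  proof (rule that)
    fix S assume S: "S \<in> sets L01" "S \<subseteq> W" "vol S \<le> g"
    have "\<psi> S = (vol S / g) *\<^sub>R \<phi> g"
      unfolding \<psi>_\<phi>[OF S] by (rule linear) (use S in auto)
    then show "\<psi> S = vol S *\<^sub>R (\<phi> g /\<^sub>R g)" by (simp add: divide_inverse)
  qed
qed

text \<open>Proportionality spreads from small sets to all sets by splitting off pieces of measure \<open>g\<close>.\<close>
lemma proportional_if_proportional_below:
  assumes g: "0 < g"
    and below: "\<And>S. S \<in> sets L01 \<Longrightarrow> S \<subseteq> W \<Longrightarrow> vol S \<le> g \<Longrightarrow> \<psi> S = vol S *\<^sub>R c"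
    and S: "S \<in> sets L01" "S \<subseteq> W"
  shows "\<psi> S = vol S *\<^sub>R c"
proof -
  obtain n where "vol S \<le> real n * g" using ex_less_of_nat_mult[OF g] less_imp_le by blast
  with S show ?thesis
  proof (induction n arbitrary: S)
    case 0
    then show ?case using g below by simp
  next
    case (Suc n)
    show ?case
    proof (cases "vol S \<le> g")
      case True
      then show ?thesis using Suc.prems below by simp
    next
      case False
      then obtain P where P: "P \<in> sets L01" "P \<subseteq> S" "vol P = g"
        using exists_subset_vol[OF Suc.prems(1), of g] g by auto
      have SP: "S - P \<in> sets L01" "S - P \<subseteq> W" using P Suc.prems by auto
      have vol_SP: "vol (S - P) = vol S - g"
        using L01.finite_measure_Diff[OF Suc.prems(1) P(1,2)] P by simp
      have "\<psi> S = \<psi> P + \<psi> (S - P)"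
        using additive[of P "S - P"] P Suc.prems by (auto simp: Un_absorb1)
      also have "\<psi> P = g *\<^sub>R c" using below[of P] P Suc.prems by auto
      also have "\<psi> (S - P) = vol (S - P) *\<^sub>R c"
      proof (rule Suc.IH[OF SP])
        show "vol (S - P) \<le> real n * g" using vol_SP Suc.prems(3) by (simp add: algebra_simps)
      qed
      finally show ?thesis by (simp add: vol_SP scaleR_add_left[symmetric])
    qed
  qed
qed

lemma proportional_to_vol:
  assumes a: "0 < a" "a < vol W"
    and level: "\<And>Y Y'. Y \<in> sets L01 \<Longrightarrow> Y' \<in> sets L01 \<Longrightarrow> Y \<subseteq> W \<Longrightarrow> Y' \<subseteq> W
      \<Longrightarrow> vol Y = a \<Longrightarrow> vol Y' = a \<Longrightarrow> \<psi> Y = \<psi> Y'"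
  obtains c where "\<And>S. S \<in> sets L01 \<Longrightarrow> S \<subseteq> W \<Longrightarrow> \<psi> S = vol S *\<^sub>R c"
proof -
  define g where "g = min a (vol W - a)"
  have g: "0 < g" "g \<le> vol W" using a by (auto simp: g_def)
  have depends_on_vol: "\<psi> B = \<psi> B'"
    if "B \<in> sets L01" "B' \<in> sets L01" "B \<subseteq> W" "B' \<subseteq> W" "vol B' = vol B" "vol B \<le> g" for B B'
    by (rule level_constant_below[OF level]) (use that in \<open>auto simp: g_def\<close>)
  obtain c where c: "\<And>S. S \<in> sets L01 \<Longrightarrow> S \<subseteq> W \<Longrightarrow> vol S \<le> g \<Longrightarrow> \<psi> S = vol S *\<^sub>R c"
    by (rule proportional_below[OF g depends_on_vol]) auto
  show ?thesis by (rule that) (rule proportional_if_proportional_below[OF g(1) c])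
qed

lemma vanishes_if_vanishes_at_level:
  assumes a: "0 < a" "a < vol W"
    and level: "\<And>Y. Y \<in> sets L01 \<Longrightarrow> Y \<subseteq> W \<Longrightarrow> vol Y = a \<Longrightarrow> \<psi> Y = 0"
    and S: "S \<in> sets L01" "S \<subseteq> W"
  shows "\<psi> S = 0"
proof -
  obtain c where c: "\<And>S. S \<in> sets L01 \<Longrightarrow> S \<subseteq> W \<Longrightarrow> \<psi> S = vol S *\<^sub>R c"
    by (rule proportional_to_vol[OF a]) (use level in auto)
  obtain Y where "Y \<in> sets L01" "Y \<subseteq> W" "vol Y = a"
    using exists_subset_vol[OF W, of a] a by auto
  then have "c = 0" using c[of Y] level[of Y] a by simp
  then show ?thesis using c S by simp
qed

end

lemma vol_additive_diff:
  assumes "vol_additive W \<phi>" "vol_additive W \<psi>"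
  shows "vol_additive W (\<lambda>S. \<phi> S - \<psi> S)"
proof -
  interpret \<phi>: vol_additive W \<phi> by (fact assms(1))
  interpret \<psi>: vol_additive W \<psi> by (fact assms(2))
  show ?thesis
  proof
    fix S T assume "S \<in> sets L01" "T \<in> sets L01" "S \<subseteq> W" "T \<subseteq> W" "S \<inter> T = {}"
    then show "\<phi> (S \<union> T) - \<psi> (S \<union> T) = \<phi> S - \<psi> S + (\<phi> T - \<psi> T)"
      by (simp add: \<phi>.additive \<psi>.additive)
  next
    fix e :: real assume "e > 0"
    then obtain d1 d2 where d: "d1 > 0" "d2 > 0"
      "\<forall>S\<in>sets L01. S \<subseteq> W \<longrightarrow> vol S < d1 \<longrightarrow> norm (\<phi> S) < e / 2"
      "\<forall>S\<in>sets L01. S \<subseteq> W \<longrightarrow> vol S < d2 \<longrightarrow> norm (\<psi> S) < e / 2"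
      using \<phi>.small[of "e / 2"] \<psi>.small[of "e / 2"] by auto
    have "norm (\<phi> S - \<psi> S) < e" if "S \<in> sets L01" "S \<subseteq> W" "vol S < min d1 d2" for S
      using d(3,4) that norm_triangle_ineq4[of "\<phi> S" "\<psi> S"] by fastforce
    then show "\<exists>d>0. \<forall>S\<in>sets L01. S \<subseteq> W \<longrightarrow> vol S < d \<longrightarrow> norm (\<phi> S - \<psi> S) < e"
      using d(1,2) by (intro exI[of _ "min d1 d2"]) auto
  qed (fact \<phi>.W)
qed

section \<open>Functions of boxes\<close>

text \<open>Abstracts the integral of an integrable \<open>f\<close> over the box \<open>E 0 \<times> \<dots> \<times> E (m - 1)\<close>,
  as a function of the sides \<open>E\<close>.\<close>
locale box_function =
  fixes m :: nat and \<Phi> :: "(nat \<Rightarrow> real set) \<Rightarrow> 'a::real_normed_vector"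
  assumes additive: "\<And>E k X Y. k < m \<Longrightarrow> E \<in> {..<m} \<rightarrow> sets L01 \<Longrightarrow> X \<in> sets L01 \<Longrightarrow> Y \<in> sets L01
      \<Longrightarrow> X \<inter> Y = {} \<Longrightarrow> \<Phi> (E(k := X \<union> Y)) = \<Phi> (E(k := X)) + \<Phi> (E(k := Y))"
    and thin_small: "\<And>e. e > 0 \<Longrightarrow> \<exists>d>0. \<forall>E k. k < m \<longrightarrow> E \<in> {..<m} \<rightarrow> sets L01 \<longrightarrow> vol (E k) < d
      \<longrightarrow> norm (\<Phi> E) < e"
begin

lemma vol_additive_side:
  assumes k: "k < m" and E: "E \<in> {..<m} \<rightarrow> sets L01" and W: "W \<in> sets L01"
  shows "vol_additive W (\<lambda>S. \<Phi> (E(k := S)))"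
proof
  fix S T assume "S \<in> sets L01" "T \<in> sets L01" "S \<inter> T = {}"
  then show "\<Phi> (E(k := S \<union> T)) = \<Phi> (E(k := S)) + \<Phi> (E(k := T))"
    using additive[OF k E] by blast
next
  fix e :: real assume "e > 0"
  then obtain d where d: "d > 0"
    "\<forall>E k. k < m \<longrightarrow> E \<in> {..<m} \<rightarrow> sets L01 \<longrightarrow> vol (E k) < d \<longrightarrow> norm (\<Phi> E) < e"
    using thin_small by blast
  have "norm (\<Phi> (E(k := S))) < e" if "S \<in> sets L01" "vol S < d" for S
  proof -
    have "E(k := S) \<in> {..<m} \<rightarrow> sets L01" using E that by (auto simp: Pi_iff)
    then show ?thesis using d(2) k that by auto
  qed
  with d(1) show "\<exists>d>0. \<forall>S\<in>sets L01. S \<subseteq> W \<longrightarrow> vol S < d \<longrightarrow> norm (\<Phi> (E(k := S))) < e"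
    by blast
qed (fact W)

lemma side_vanishes:
  assumes k: "k < m" and E: "E \<in> {..<m} \<rightarrow> sets L01"
    and W: "W \<in> sets L01" and a: "0 < a" "a < vol W"
    and level: "\<And>Y. Y \<in> sets L01 \<Longrightarrow> Y \<subseteq> W \<Longrightarrow> vol Y = a \<Longrightarrow> \<Phi> (E(k := Y)) = 0"
    and S: "S \<in> sets L01" "S \<subseteq> W"
  shows "\<Phi> (E(k := S)) = 0"
  using vol_additive.vanishes_if_vanishes_at_level[OF vol_additive_side[OF k E W] a level S] .

lemma vanishes_if_side_free:
  assumes k: "k < m" and B: "B \<in> {..<m} \<rightarrow> sets L01" "disjoint_family_on B {..<m}"
    and V: "V \<in> sets L01" "B k \<subseteq> V"
    and a: "0 < a" "a < vol (V - (\<Union>j\<in>{..<m} - {k}. B j))"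
    and level: "\<And>Y. Y \<in> sets L01 \<Longrightarrow> Y \<subseteq> V - (\<Union>j\<in>{..<m} - {k}. B j) \<Longrightarrow> vol Y = a
      \<Longrightarrow> \<Phi> (B(k := Y)) = 0"
  shows "\<Phi> B = 0"
proof -
  have W: "V - (\<Union>j\<in>{..<m} - {k}. B j) \<in> sets L01" using V B by auto
  have "B k \<inter> B j = {}" if "j \<in> {..<m} - {k}" for j
    using disjoint_family_onD[OF B(2), of k j] k that by auto
  then have "B k \<subseteq> V - (\<Union>j\<in>{..<m} - {k}. B j)" using V by blast
  moreover have "B k \<in> sets L01" using B(1) k by auto
  ultimately have "\<Phi> (B(k := B k)) = 0" by (intro side_vanishes[OF k B(1) W a level])
  then show ?thesis by simp
qed

text \<open>Part (1) of the theorem, abstractly: the sides of a disjoint \<open>\<alpha>\<close>-box are replaced one at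
  a time by arbitrary sides of measure \<open>\<le> \<delta>\<close>; \<open>\<delta>\<close> is so small that the other sides always leave
  room of measure \<open>> \<alpha> k\<close> for side \<open>k\<close>.\<close>
lemma small_boxes_vanish:
  assumes pos: "\<forall>i<m. 0 < \<alpha> i" and sum: "(\<Sum>i<m. \<alpha> i) < 1"
    and vanish: "\<And>A. A \<in> {..<m} \<rightarrow> sets L01 \<Longrightarrow> disjoint_family_on A {..<m}
      \<Longrightarrow> \<forall>i<m. vol (A i) = \<alpha> i \<Longrightarrow> \<Phi> A = 0"
  obtains \<delta> where "\<delta> > 0" "\<And>B. B \<in> {..<m} \<rightarrow> sets L01 \<Longrightarrow> disjoint_family_on B {..<m}
      \<Longrightarrow> \<forall>i<m. vol (B i) \<le> \<delta> \<Longrightarrow> \<Phi> B = 0"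
proof
  define \<delta> where "\<delta> = (1 - (\<Sum>i<m. \<alpha> i)) / (2 * (real m + 1))"
  show \<delta>: "\<delta> > 0" using sum by (simp add: \<delta>_def)
  have m\<delta>: "real m * \<delta> < 1 - (\<Sum>i<m. \<alpha> i)"
  proof -
    have "real m * \<delta> = (1 - (\<Sum>i<m. \<alpha> i)) * (real m / (2 * (real m + 1)))"
      by (simp add: \<delta>_def)
    also have "\<dots> < (1 - (\<Sum>i<m. \<alpha> i)) * 1"
      using sum by (intro mult_strict_left_mono) auto
    finally show ?thesis by simp
  qed
  have "\<Phi> B = 0"
    if "k \<le> m" "B \<in> {..<m} \<rightarrow> sets L01" "disjoint_family_on B {..<m}"
      "\<forall>i<m. (i < k \<longrightarrow> vol (B i) \<le> \<delta>) \<and> (k \<le> i \<longrightarrow> vol (B i) = \<alpha> i)" for k B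
    using that
  proof (induction k arbitrary: B)
    case 0
    then show ?case using vanish by auto
  next
    case (Suc k)
    note B = Suc.prems(2,3) and B_vol = Suc.prems(4)
    have k: "k < m" using Suc.prems by simp
    have "(\<Sum>j\<in>{..<m} - {k}. vol (B j)) \<le> (\<Sum>j\<in>{..<m} - {k}. \<alpha> j + \<delta>)"
      using B_vol pos \<delta> by (intro sum_mono) (smt (verit) DiffE lessThan_iff not_le)
    also have "\<dots> = (\<Sum>i<m. \<alpha> i) - \<alpha> k + real (m - 1) * \<delta>"
      using k by (simp add: sum.distrib sum_diff1)
    also have "\<dots> < 1 - \<alpha> k"
      using m\<delta> \<delta> k by (simp add: of_nat_diff left_diff_distrib)
    finally have others: "(\<Sum>j\<in>{..<m} - {k}. vol (B j)) < 1 - \<alpha> k" .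
    have "B j \<in> sets L01" if "j \<in> {..<m} - {k}" for j using B(1) that by auto
    then have "1 - (\<Sum>j\<in>{..<m} - {k}. vol (B j)) \<le> vol ({0..1} - (\<Union>j\<in>{..<m} - {k}. B j))"
      using vol_Diff_UN_ge[OF unit_interval_in_sets_L01, of "{..<m} - {k}" B] L01.prob_space by simp
    with others have room: "\<alpha> k < vol ({0..1} - (\<Union>j\<in>{..<m} - {k}. B j))" by simp
    show ?case
    proof (rule vanishes_if_side_free[OF k B unit_interval_in_sets_L01, where a = "\<alpha> k"])
      show "B k \<subseteq> {0..1}" using B k sets_L01_subset by auto
      show "0 < \<alpha> k" using k pos by simp
      show "\<alpha> k < vol ({0..1} - (\<Union>j\<in>{..<m} - {k}. B j))" by (fact room)
    next
      fix Y assume Y: "Y \<in> sets L01" "Y \<subseteq> {0..1} - (\<Union>j\<in>{..<m} - {k}. B j)" "vol Y = \<alpha> k"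
      show "\<Phi> (B(k := Y)) = 0"
      proof (rule Suc.IH)
        show "k \<le> m" using k by simp
        show "B(k := Y) \<in> {..<m} \<rightarrow> sets L01" using B Y by auto
        show "disjoint_family_on (B(k := Y)) {..<m}"
          using B Y k unfolding disjoint_family_on_def by auto
        show "\<forall>i<m. (i < k \<longrightarrow> vol ((B(k := Y)) i) \<le> \<delta>) \<and> (k \<le> i \<longrightarrow> vol ((B(k := Y)) i) = \<alpha> i)"
          using B_vol Y(3) by auto
      qed
    qed
  qed
  from this[of m] show "\<Phi> B = 0" if "B \<in> {..<m} \<rightarrow> sets L01" "disjoint_family_on B {..<m}"
    "\<forall>i<m. vol (B i) \<le> \<delta>" for B
    using that by auto
qed

end

section \<open>The symmetric case\<close>

text \<open>The case \<open>m = 2\<close> of part (2): \<open>Q X Y\<close> plays the role of the integral of a symmetric \<open>f\<close>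
  over \<open>X \<times> Y\<close>, restricted to subsets of a set \<open>V\<close> of measure \<open>a + b\<close>.\<close>
locale vanishing_symmetric_form =
  fixes Q :: "real set \<Rightarrow> real set \<Rightarrow> 'a::real_normed_vector" and V :: "real set" and a b :: real
  assumes ab: "0 < a" "0 < b" "a \<noteq> b"
    and V: "V \<in> sets L01" "vol V = a + b"
    and additive: "\<And>X Y Z. X \<in> sets L01 \<Longrightarrow> Y \<in> sets L01 \<Longrightarrow> Z \<in> sets L01 \<Longrightarrow> X \<inter> Y = {}
      \<Longrightarrow> Q (X \<union> Y) Z = Q X Z + Q Y Z"
    and symmetric: "\<And>X Y. X \<in> sets L01 \<Longrightarrow> Y \<in> sets L01 \<Longrightarrow> Q X Y = Q Y X"
    and small: "\<And>e. e > 0 \<Longrightarrow> \<exists>d>0. \<forall>X\<in>sets L01. \<forall>Y\<in>sets L01. vol X < d \<longrightarrow> norm (Q X Y) < e"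
    and vanishes: "\<And>X Y. X \<in> sets L01 \<Longrightarrow> Y \<in> sets L01 \<Longrightarrow> X \<subseteq> V \<Longrightarrow> Y \<subseteq> V \<Longrightarrow> X \<inter> Y = {}
      \<Longrightarrow> vol X = a \<Longrightarrow> vol Y = b \<Longrightarrow> Q X Y = 0"
begin

lemma additive_right:
  assumes "X \<in> sets L01" "Y \<in> sets L01" "Z \<in> sets L01" "X \<inter> Y = {}"
  shows "Q Z (X \<union> Y) = Q Z X + Q Z Y"
proof -
  have "Q Z (X \<union> Y) = Q (X \<union> Y) Z" by (rule symmetric) (use assms in auto)
  also have "\<dots> = Q X Z + Q Y Z" by (rule additive) fact+
  also have "\<dots> = Q Z X + Q Z Y" using assms by (simp only: symmetric[of X Z] symmetric[of Y Z])
  finally show ?thesis .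
qed

lemma vol_additive_left:
  assumes Y: "Y \<in> sets L01" and W: "W \<in> sets L01"
  shows "vol_additive W (\<lambda>X. Q X Y)"
proof
  fix S T assume "S \<in> sets L01" "T \<in> sets L01" "S \<inter> T = {}"
  then show "Q (S \<union> T) Y = Q S Y + Q T Y" using additive Y by blast
next
  fix e :: real assume "e > 0"
  then obtain d where "d > 0" "\<forall>X\<in>sets L01. \<forall>Y\<in>sets L01. vol X < d \<longrightarrow> norm (Q X Y) < e"
    using small by blast
  then show "\<exists>d>0. \<forall>S\<in>sets L01. S \<subseteq> W \<longrightarrow> vol S < d \<longrightarrow> norm (Q S Y) < e"
    using Y by blast
qed (fact W)

lemma vol_additive_right:
  assumes X: "X \<in> sets L01" and W: "W \<in> sets L01"
  shows "vol_additive W (Q X)"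
proof
  fix S T assume "S \<in> sets L01" "T \<in> sets L01" "S \<inter> T = {}"
  then show "Q X (S \<union> T) = Q X S + Q X T" using additive_right X by blast
next
  fix e :: real assume "e > 0"
  then obtain d where d: "d > 0" "\<forall>X\<in>sets L01. \<forall>Y\<in>sets L01. vol X < d \<longrightarrow> norm (Q X Y) < e"
    using small by blast
  have "norm (Q X S) < e" if "S \<in> sets L01" "vol S < d" for S
    using d(2) X that symmetric[OF X that(1)] by simp
  with d(1) show "\<exists>d>0. \<forall>S\<in>sets L01. S \<subseteq> W \<longrightarrow> vol S < d \<longrightarrow> norm (Q X S) < e"
    by blast
qed (fact W)

text \<open>Exchanging \<open>B\<close> and \<open>C\<close> between the two sides of the vanishing pairs
  \<open>(Y \<union> B, Z \<union> C)\<close> and \<open>(Y \<union> C, Z \<union> B)\<close>.\<close>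
lemma exchange:
  assumes sets: "Y \<in> sets L01" "Z \<in> sets L01" "B \<in> sets L01" "C \<in> sets L01"
    and sub: "Y \<subseteq> V" "Z \<subseteq> V" "B \<subseteq> V" "C \<subseteq> V"
    and disj: "Y \<inter> Z = {}" "Y \<inter> B = {}" "Y \<inter> C = {}" "Z \<inter> B = {}" "Z \<inter> C = {}" "B \<inter> C = {}"
    and vol: "vol C = vol B" "vol Y + vol B = a" "vol Z + vol B = b"
  shows "Q B Z - Q C Z = Q B Y - Q C Y"
proof -
  have expand: "Q (Y \<union> B) (Z \<union> C) = Q Y Z + Q Y C + Q B Z + Q B C"
    "Q (Y \<union> C) (Z \<union> B) = Q Y Z + Q Y B + Q C Z + Q C B"
    using sets disj by (simp_all add: additive additive_right Int_commute)
  have sym: "Q Y C = Q C Y" "Q Y B = Q B Y" "Q C B = Q B C"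
    using sets symmetric by auto
  have "Q B Z - Q C Z - (Q B Y - Q C Y) = Q (Y \<union> B) (Z \<union> C) - Q (Y \<union> C) (Z \<union> B)"
    unfolding expand sym by (simp add: algebra_simps)
  also have "\<dots> = 0 - 0"
  proof -
    have "Q (Y \<union> B) (Z \<union> C) = 0" "Q (Y \<union> C) (Z \<union> B) = 0"
      using sets sub disj vol by (auto intro!: vanishes simp: L01.finite_measure_Union)
    then show ?thesis by simp
  qed
  finally show ?thesis by simp
qed

lemma swap_equal_sides:
  assumes B: "B \<in> sets L01" "B \<subseteq> V" and C: "C \<in> sets L01" "C \<subseteq> V"
    and S: "S \<in> sets L01" "S \<subseteq> V"
    and disj: "B \<inter> C = {}" "B \<inter> S = {}" "C \<inter> S = {}"
    and \<beta>: "vol B = \<beta>" "vol C = \<beta>" "\<beta> < a" "\<beta> < b"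
  shows "Q B S = Q C S"
proof -
  define W where "W = V - (B \<union> C)"
  have W: "W \<in> sets L01" using V B C by (simp add: W_def)
  have "vol (B \<union> C) = 2 * \<beta>" using B C disj \<beta> by (simp add: L01.finite_measure_Union)
  then have vol_W: "vol W = a + b - 2 * \<beta>"
    using L01.finite_measure_Diff[of V "B \<union> C"] V B C by (simp add: W_def)
  define \<psi> where "\<psi> Z = Q B Z - Q C Z" for Z
  interpret \<psi>: vol_additive W \<psi>
    unfolding \<psi>_def using vol_additive_diff vol_additive_right B C W by blast
  have half: "\<psi> W = 2 *\<^sub>R \<psi> Y" if Y: "Y \<in> sets L01" "Y \<subseteq> W" "vol Y = a - \<beta>" for Y
  proof -
    have Z: "W - Y \<in> sets L01" "vol (W - Y) = b - \<beta>"
      using W Y vol_W L01.finite_measure_Diff[OF W Y(1,2)] by auto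
    have "\<psi> (W - Y) = \<psi> Y"
      unfolding \<psi>_def using Y Z B C disj \<beta>
      by (intro exchange) (auto simp: W_def)
    moreover have "\<psi> W = \<psi> Y + \<psi> (W - Y)"
      using \<psi>.additive[of Y "W - Y"] Y Z by (simp add: Un_absorb1)
    ultimately show ?thesis by (simp add: scaleR_2)
  qed
  have a_W: "0 < a - \<beta>" "a - \<beta> < vol W" using \<beta> vol_W by auto
  have level: "\<psi> Y = \<psi> Y'"
    if "Y \<in> sets L01" "Y' \<in> sets L01" "Y \<subseteq> W" "Y' \<subseteq> W" "vol Y = a - \<beta>" "vol Y' = a - \<beta>" for Y Y'
    using half[of Y] half[of Y'] that by simp
  obtain c where c: "\<And>S. S \<in> sets L01 \<Longrightarrow> S \<subseteq> W \<Longrightarrow> \<psi> S = vol S *\<^sub>R c"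
    by (rule \<psi>.proportional_to_vol[OF a_W level]) auto
  obtain Y where "Y \<in> sets L01" "Y \<subseteq> W" "vol Y = a - \<beta>"
    using exists_subset_vol[OF W, of "a - \<beta>"] a_W by auto
  then have "(a + b - 2 * \<beta>) *\<^sub>R c = (2 * (a - \<beta>)) *\<^sub>R c"
    using half c[of Y] c[of W] W vol_W by simp
  moreover have "(a - b) *\<^sub>R c = (2 * (a - \<beta>) - (a + b - 2 * \<beta>)) *\<^sub>R c"
    by (rule arg_cong[where f = "\<lambda>t. t *\<^sub>R c"]) simp
  then have "(a - b) *\<^sub>R c = (2 * (a - \<beta>)) *\<^sub>R c - (a + b - 2 * \<beta>) *\<^sub>R c"
    by (simp only: scaleR_left_diff_distrib)
  ultimately have "(a - b) *\<^sub>R c = 0" by (metis diff_self)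
  then have "c = 0" using ab by simp
  moreover have "S \<subseteq> W" using S disj by (auto simp: W_def)
  ultimately have "\<psi> S = 0" using c S by simp
  then show ?thesis by (simp add: \<psi>_def)
qed

text \<open>On subsets of an \<open>a\<close>-set \<open>X\<close>, \<open>Q \<cdot> (V - X)\<close> is constant on sets of measure \<open>min a b / 4\<close>
  by \<open>swap_equal_sides\<close>, hence proportional to \<open>vol\<close>, and it vanishes on \<open>X\<close> itself.\<close>
lemma vanishes_on_complement:
  assumes X: "X \<in> sets L01" "X \<subseteq> V" "vol X = a" and Z: "Z \<in> sets L01" "Z \<subseteq> X"
  shows "Q Z (V - X) = 0"
proof -
  define T where "T = V - X"
  have T: "T \<in> sets L01" "T \<subseteq> V" "vol T = b" "T \<inter> X = {}"
    using L01.finite_measure_Diff[OF V(1) X(1,2)] V X by (auto simp: T_def)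
  define h where "h = min a b / 4"
  have h: "0 < h" "h < vol X" "4 * h \<le> a" "h < b" using ab X by (auto simp: h_def)
  interpret QT: vol_additive X "\<lambda>S. Q S T" by (rule vol_additive_left[OF T(1) X(1)])
  have level: "Q Y T = Q Y' T"
    if Y: "Y \<in> sets L01" "Y \<subseteq> X" "vol Y = h" and Y': "Y' \<in> sets L01" "Y' \<subseteq> X" "vol Y' = h" for Y Y'
  proof -
    have "vol X - vol (Y \<union> Y') \<le> vol (X - (Y \<union> Y'))"
      using X Y Y' by (intro vol_Diff_ge) auto
    moreover have "vol (Y \<union> Y') \<le> 2 * h" using measure_Un_le[of Y L01 Y'] Y Y' by simp
    ultimately have "h \<le> vol (X - (Y \<union> Y'))" using X h by linarith
    then obtain Y'' where Y'': "Y'' \<in> sets L01" "Y'' \<subseteq> X - (Y \<union> Y')" "vol Y'' = h"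
      using exists_subset_vol[of "X - (Y \<union> Y')" h] X Y Y' h by auto
    have "Q Y T = Q Y'' T"
      by (rule swap_equal_sides) (use Y Y'' T X h in auto)
    moreover have "Q Y' T = Q Y'' T"
      by (rule swap_equal_sides) (use Y' Y'' T X h in auto)
    ultimately
    show ?thesis by simp
  qed
  obtain c where c: "\<And>S. S \<in> sets L01 \<Longrightarrow> S \<subseteq> X \<Longrightarrow> Q S T = vol S *\<^sub>R c"
    by (rule QT.proportional_to_vol[OF h(1,2) level]) auto
  have "Q X T = 0" using vanishes[OF X(1) T(1) X(2) T(2)] T X by (auto simp: Int_commute)
  then have "c = 0" using c[of X] X ab by simp
  then show ?thesis using c Z by (simp add: T_def)
qed

lemma vanishes_on_small:
  assumes B: "B \<in> sets L01" "B \<subseteq> V" "vol B \<le> min a b / 4"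
    and C: "C \<in> sets L01" "C \<subseteq> V" "B \<inter> C = {}"
  shows "Q B C = 0"
proof -
  define W where "W = V - B"
  have W: "W \<in> sets L01" "vol W = a + b - vol B"
    using L01.finite_measure_Diff[OF V(1) B(1,2)] V B by (auto simp: W_def)
  interpret QB: vol_additive W "Q B" by (rule vol_additive_right[OF B(1) W(1)])
  show ?thesis
  proof (rule QB.vanishes_if_vanishes_at_level)
    show "0 < b" "b < vol W" using ab W B by auto
    show "C \<in> sets L01" "C \<subseteq> W" using C by (auto simp: W_def)
  next
    fix T assume T: "T \<in> sets L01" "T \<subseteq> W" "vol T = b"
    have X: "V - T \<in> sets L01" "V - T \<subseteq> V" "vol (V - T) = a"
      using L01.finite_measure_Diff[of V T] V T by (auto simp: W_def)
    have "V - (V - T) = T" using T by (auto simp: W_def)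
    moreover have "B \<subseteq> V - T" using T B by (auto simp: W_def)
    ultimately show "Q B T = 0" using vanishes_on_complement[OF X B(1)] by simp
  qed
qed

end

lemma permutes_comp_in_funcset: "\<sigma> permutes I \<Longrightarrow> A \<in> I \<rightarrow> S \<Longrightarrow> A \<circ> \<sigma> \<in> I \<rightarrow> S"
  using permutes_in_image by fastforce

lemma disjoint_family_on_comp_permutes:
  assumes "\<sigma> permutes I" "disjoint_family_on A I"
  shows "disjoint_family_on (A \<circ> \<sigma>) I"
proof (unfold disjoint_family_on_def, intro ballI impI)
  fix i j assume "i \<in> I" "j \<in> I" "i \<noteq> j"
  then have "\<sigma> i \<in> I" "\<sigma> j \<in> I" "\<sigma> i \<noteq> \<sigma> j"
    using permutes_in_image[OF assms(1)] permutes_inj[OF assms(1)] by (auto simp: inj_eq)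
  then show "(A \<circ> \<sigma>) i \<inter> (A \<circ> \<sigma>) j = {}"
    using assms(2) by (simp add: disjoint_family_on_def)
qed

locale symmetric_box_function = box_function +
  assumes symmetric: "\<And>\<sigma> E. \<sigma> permutes {..<m} \<Longrightarrow> E \<in> {..<m} \<rightarrow> sets L01 \<Longrightarrow> \<Phi> (E \<circ> \<sigma>) = \<Phi> E"

lemma symmetric_box_function_fix_last:
  assumes "symmetric_box_function (Suc m) \<Phi>" and Y: "Y \<in> sets L01"
  shows "symmetric_box_function m (\<lambda>A. \<Phi> (A(m := Y)))"
proof -
  interpret symmetric_box_function "Suc m" \<Phi> by (fact assms(1))
  have upd: "E(m := Y) \<in> {..<Suc m} \<rightarrow> sets L01" if "E \<in> {..<m} \<rightarrow> sets L01" for E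
    using that Y by (auto simp: Pi_iff less_Suc_eq)
  show ?thesis
  proof
    fix E k X Z assume k: "k < m" and E: "E \<in> {..<m} \<rightarrow> sets L01"
      and XZ: "X \<in> sets L01" "Z \<in> sets L01" "X \<inter> Z = {}"
    have "(E(k := S))(m := Y) = (E(m := Y))(k := S)" for S using k by (simp add: fun_upd_twist)
    then show "\<Phi> ((E(k := X \<union> Z))(m := Y)) = \<Phi> ((E(k := X))(m := Y)) + \<Phi> ((E(k := Z))(m := Y))"
      using additive[OF _ upd[OF E] XZ] k by simp
  next
    fix e :: real assume "e > 0"
    then obtain d where d: "d > 0"
      "\<forall>E k. k < Suc m \<longrightarrow> E \<in> {..<Suc m} \<rightarrow> sets L01 \<longrightarrow> vol (E k) < d \<longrightarrow> norm (\<Phi> E) < e"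
      using thin_small by blast
    have "norm (\<Phi> (E(m := Y))) < e" if "k < m" "E \<in> {..<m} \<rightarrow> sets L01" "vol (E k) < d" for E k
      using d(2)[rule_format, of k "E(m := Y)"] upd that by simp
    with d(1) show "\<exists>d>0. \<forall>E k. k < m \<longrightarrow> E \<in> {..<m} \<rightarrow> sets L01 \<longrightarrow> vol (E k) < d
        \<longrightarrow> norm (\<Phi> (E(m := Y))) < e"
      by blast
  next
    fix \<sigma> E assume \<sigma>: "\<sigma> permutes {..<m}" and E: "E \<in> {..<m} \<rightarrow> sets L01"
    have \<sigma>': "\<sigma> permutes {..<Suc m}" using permutes_subset[OF \<sigma>] by auto
    have "\<sigma> m = m" using permutes_not_in[OF \<sigma>] by simp
    then have "\<sigma> x = m \<longleftrightarrow> x = m" for x using permutes_inj[OF \<sigma>] by (metis injD)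
    then have "(E \<circ> \<sigma>)(m := Y) = E(m := Y) \<circ> \<sigma>" by (auto simp: fun_eq_iff)
    then show "\<Phi> ((E \<circ> \<sigma>)(m := Y)) = \<Phi> (E(m := Y))"
      using symmetric[OF \<sigma>' upd[OF E]] by simp
  qed
qed

text \<open>The set \<open>V\<close> makes the induction on \<open>m\<close> work: once the last side is fixed to \<open>Y\<close>, the
  remaining sides range over subsets of \<open>V - Y\<close>.\<close>
definition forces_small_boxes :: "nat \<Rightarrow> (nat \<Rightarrow> real) \<Rightarrow> real \<Rightarrow> bool" where
  "forces_small_boxes m \<beta> \<delta> \<longleftrightarrow>
     (\<forall>V (\<Phi> :: (nat \<Rightarrow> real set) \<Rightarrow> complex). V \<in> sets L01 \<longrightarrow> vol V = (\<Sum>i<m. \<beta> i) \<longrightarrow>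
        symmetric_box_function m \<Phi> \<longrightarrow>
        (\<forall>A. A \<in> {..<m} \<rightarrow> sets L01 \<longrightarrow> disjoint_family_on A {..<m} \<longrightarrow>
           (\<forall>i<m. A i \<subseteq> V \<and> vol (A i) = \<beta> i) \<longrightarrow> \<Phi> A = 0) \<longrightarrow>
        (\<forall>B. B \<in> {..<m} \<rightarrow> sets L01 \<longrightarrow> disjoint_family_on B {..<m} \<longrightarrow>
           (\<forall>i<m. B i \<subseteq> V \<and> vol (B i) \<le> \<delta>) \<longrightarrow> \<Phi> B = 0))"

lemma forces_small_boxesI:
  assumes "\<And>V (\<Phi> :: (nat \<Rightarrow> real set) \<Rightarrow> complex) B. V \<in> sets L01 \<Longrightarrow> vol V = (\<Sum>i<m. \<beta> i)
    \<Longrightarrow> symmetric_box_function m \<Phi>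
    \<Longrightarrow> (\<And>A. A \<in> {..<m} \<rightarrow> sets L01 \<Longrightarrow> disjoint_family_on A {..<m}
          \<Longrightarrow> \<forall>i<m. A i \<subseteq> V \<and> vol (A i) = \<beta> i \<Longrightarrow> \<Phi> A = 0)
    \<Longrightarrow> B \<in> {..<m} \<rightarrow> sets L01 \<Longrightarrow> disjoint_family_on B {..<m}
    \<Longrightarrow> \<forall>i<m. B i \<subseteq> V \<and> vol (B i) \<le> \<delta> \<Longrightarrow> \<Phi> B = 0"
  shows "forces_small_boxes m \<beta> \<delta>"
  unfolding forces_small_boxes_def
proof (intro allI impI)
  fix V and \<Phi> :: "(nat \<Rightarrow> real set) \<Rightarrow> complex" and B
  assume V: "V \<in> sets L01" "vol V = (\<Sum>i<m. \<beta> i)"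
    and sym: "symmetric_box_function m \<Phi>"
    and vanish: "\<forall>A. A \<in> {..<m} \<rightarrow> sets L01 \<longrightarrow> disjoint_family_on A {..<m} \<longrightarrow>
       (\<forall>i<m. A i \<subseteq> V \<and> vol (A i) = \<beta> i) \<longrightarrow> \<Phi> A = 0"
    and B: "B \<in> {..<m} \<rightarrow> sets L01" "disjoint_family_on B {..<m}" "\<forall>i<m. B i \<subseteq> V \<and> vol (B i) \<le> \<delta>"
  show "\<Phi> B = 0" by (rule assms[OF V sym _ B]) (use vanish in blast)
qed

lemma forces_small_boxesD:
  fixes \<Phi> :: "(nat \<Rightarrow> real set) \<Rightarrow> complex"
  assumes "forces_small_boxes m \<beta> \<delta>" "V \<in> sets L01" "vol V = (\<Sum>i<m. \<beta> i)"
    "symmetric_box_function m \<Phi>"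
    "\<And>A. A \<in> {..<m} \<rightarrow> sets L01 \<Longrightarrow> disjoint_family_on A {..<m}
      \<Longrightarrow> \<forall>i<m. A i \<subseteq> V \<and> vol (A i) = \<beta> i \<Longrightarrow> \<Phi> A = 0"
    "B \<in> {..<m} \<rightarrow> sets L01" "disjoint_family_on B {..<m}" "\<forall>i<m. B i \<subseteq> V \<and> vol (B i) \<le> \<delta>"
  shows "\<Phi> B = 0"
proof -
  have "\<forall>A. A \<in> {..<m} \<rightarrow> sets L01 \<longrightarrow> disjoint_family_on A {..<m} \<longrightarrow>
      (\<forall>i<m. A i \<subseteq> V \<and> vol (A i) = \<beta> i) \<longrightarrow> \<Phi> A = 0"
    using assms(5) by blast
  moreover note spec[OF spec[OF assms(1)[unfolded forces_small_boxes_def], of V], of \<Phi>]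
  ultimately have "\<forall>B. B \<in> {..<m} \<rightarrow> sets L01 \<longrightarrow> disjoint_family_on B {..<m} \<longrightarrow>
      (\<forall>i<m. B i \<subseteq> V \<and> vol (B i) \<le> \<delta>) \<longrightarrow> \<Phi> B = 0"
    using assms(2-4) by blast
  then show ?thesis using assms(6-8) by blast
qed

lemma forces_small_boxes_two:
  assumes pos: "0 < \<beta> 0" "0 < \<beta> 1" and ne: "\<beta> 0 \<noteq> \<beta> 1"
  shows "forces_small_boxes 2 \<beta> (min (\<beta> 0) (\<beta> 1) / 4)"
proof (rule forces_small_boxesI)
  fix V and B :: "nat \<Rightarrow> real set" and \<Phi> :: "(nat \<Rightarrow> real set) \<Rightarrow> complex"
  assume V: "V \<in> sets L01" "vol V = (\<Sum>i<2. \<beta> i)" and "symmetric_box_function 2 \<Phi>"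
    and vanish: "\<And>A. A \<in> {..<2} \<rightarrow> sets L01 \<Longrightarrow> disjoint_family_on A {..<2}
      \<Longrightarrow> \<forall>i<2. A i \<subseteq> V \<and> vol (A i) = \<beta> i \<Longrightarrow> \<Phi> A = 0"
    and B: "B \<in> {..<2} \<rightarrow> sets L01" "disjoint_family_on B {..<2}"
      "\<forall>i<2. B i \<subseteq> V \<and> vol (B i) \<le> min (\<beta> 0) (\<beta> 1) / 4"
  interpret symmetric_box_function 2 \<Phi> by fact
  define P where "P X Y = (B(1 := Y))(0 := X)" for X Y
  have P: "P X Y \<in> {..<2} \<rightarrow> sets L01" if "X \<in> sets L01" "Y \<in> sets L01" for X Y
    using that by (auto simp: P_def less_2_cases_iff)
  interpret Q: vanishing_symmetric_form "\<lambda>X Y. \<Phi> (P X Y)" V "\<beta> 0" "\<beta> 1"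
  proof
    show "vol V = \<beta> 0 + \<beta> 1" using V by (simp add: numeral_2_eq_2)
  next
    fix X Y Z assume XYZ: "X \<in> sets L01" "Y \<in> sets L01" "Z \<in> sets L01" "X \<inter> Y = {}"
    have "B(1 := Z) \<in> {..<2} \<rightarrow> sets L01" using B(1) XYZ(3) by (auto simp: less_2_cases_iff)
    from additive[OF _ this XYZ(1,2,4)] show "\<Phi> (P (X \<union> Y) Z) = \<Phi> (P X Z) + \<Phi> (P Y Z)"
      by (simp add: P_def)
  next
    fix X Y assume XY: "X \<in> sets L01" "Y \<in> sets L01"
    have swap: "Transposition.transpose 0 1 permutes {..<2::nat}" by (rule permutes_swap_id) auto
    have "P X Y \<circ> Transposition.transpose 0 1 = P Y X"
      by (rule ext) (simp add: P_def Transposition.transpose_def)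
    then show "\<Phi> (P X Y) = \<Phi> (P Y X)" using symmetric[OF swap P[OF XY]] by simp
  next
    fix e :: real assume "e > 0"
    then obtain d where d: "d > 0"
      "\<forall>E k. k < 2 \<longrightarrow> E \<in> {..<2} \<rightarrow> sets L01 \<longrightarrow> vol (E k) < d \<longrightarrow> norm (\<Phi> E) < e"
      using thin_small by blast
    have "norm (\<Phi> (P X Y)) < e" if "X \<in> sets L01" "Y \<in> sets L01" "vol X < d" for X Y
      using d(2)[rule_format, of 0 "P X Y"] P that by (simp add: P_def)
    with d(1) show "\<exists>d>0. \<forall>X\<in>sets L01. \<forall>Y\<in>sets L01. vol X < d \<longrightarrow> norm (\<Phi> (P X Y)) < e"
      by blast
  next
    fix X Y assume "X \<in> sets L01" "Y \<in> sets L01" "X \<subseteq> V" "Y \<subseteq> V" "X \<inter> Y = {}"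
      "vol X = \<beta> 0" "vol Y = \<beta> 1"
    then show "\<Phi> (P X Y) = 0"
      by (intro vanish P) (auto simp: P_def less_2_cases_iff disjoint_family_on_def)
  qed (use pos ne V in auto)
  have "P (B 0) (B 1) = B" by (auto simp: P_def)
  moreover have "\<Phi> (P (B 0) (B 1)) = 0"
    using B by (intro Q.vanishes_on_small) (auto simp: disjoint_family_on_def)
  ultimately show "\<Phi> B = 0" by simp
qed

lemma forces_small_boxes_permute:
  assumes \<sigma>: "\<sigma> permutes {..<m}" and forces: "forces_small_boxes m (\<beta> \<circ> \<sigma>) \<delta>"
  shows "forces_small_boxes m \<beta> \<delta>"
proof (rule forces_small_boxesI)
  fix V B and \<Phi> :: "(nat \<Rightarrow> real set) \<Rightarrow> complex"
  assume V: "V \<in> sets L01" "vol V = (\<Sum>i<m. \<beta> i)" and sym: "symmetric_box_function m \<Phi>"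
    and vanish: "\<And>A. A \<in> {..<m} \<rightarrow> sets L01 \<Longrightarrow> disjoint_family_on A {..<m}
      \<Longrightarrow> \<forall>i<m. A i \<subseteq> V \<and> vol (A i) = \<beta> i \<Longrightarrow> \<Phi> A = 0"
    and B: "B \<in> {..<m} \<rightarrow> sets L01" "disjoint_family_on B {..<m}" "\<forall>i<m. B i \<subseteq> V \<and> vol (B i) \<le> \<delta>"
  interpret symmetric_box_function m \<Phi> by fact
  have \<sigma>': "inv \<sigma> permutes {..<m}" by (rule permutes_inv[OF \<sigma>])
  show "\<Phi> B = 0"
  proof (rule forces_small_boxesD[OF forces V(1) _ sym _ B])
    show "vol V = (\<Sum>i<m. (\<beta> \<circ> \<sigma>) i)" using V sum.permute[OF \<sigma>, of \<beta>] by simp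
  next
    fix A assume A: "A \<in> {..<m} \<rightarrow> sets L01" "disjoint_family_on A {..<m}"
      "\<forall>i<m. A i \<subseteq> V \<and> vol (A i) = (\<beta> \<circ> \<sigma>) i"
    have A': "A \<circ> inv \<sigma> \<in> {..<m} \<rightarrow> sets L01" "disjoint_family_on (A \<circ> inv \<sigma>) {..<m}"
      using permutes_comp_in_funcset[OF \<sigma>' A(1)] disjoint_family_on_comp_permutes[OF \<sigma>' A(2)] by auto
    have "\<forall>i<m. (A \<circ> inv \<sigma>) i \<subseteq> V \<and> vol ((A \<circ> inv \<sigma>) i) = \<beta> i"
      using A(3) permutes_in_image[OF \<sigma>'] permutes_inverses(1)[OF \<sigma>] by auto
    then have "\<Phi> (A \<circ> inv \<sigma>) = 0" using vanish A' by blast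
    moreover have "A \<circ> inv \<sigma> \<circ> \<sigma> = A" using permutes_inverses(2)[OF \<sigma>] by (auto simp: fun_eq_iff)
    ultimately show "\<Phi> A = 0" using symmetric[OF \<sigma> A'(1)] by simp
  qed
qed

lemma forces_small_boxes_fix_last:
  fixes \<Phi> :: "(nat \<Rightarrow> real set) \<Rightarrow> complex"
  assumes forces: "forces_small_boxes m \<beta> \<delta>" and sym: "symmetric_box_function (Suc m) \<Phi>"
    and vanish: "\<And>A. A \<in> {..<Suc m} \<rightarrow> sets L01 \<Longrightarrow> disjoint_family_on A {..<Suc m}
      \<Longrightarrow> \<forall>i<Suc m. A i \<subseteq> V \<and> vol (A i) = \<beta> i \<Longrightarrow> \<Phi> A = 0"
    and V: "V \<in> sets L01" and Y: "Y \<in> sets L01" "Y \<subseteq> V" "vol Y = \<beta> m"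
      "vol (V - Y) = (\<Sum>i<m. \<beta> i)"
    and B: "B \<in> {..<m} \<rightarrow> sets L01" "disjoint_family_on B {..<m}"
      "\<forall>i<m. B i \<subseteq> V - Y \<and> vol (B i) \<le> \<delta>"
  shows "\<Phi> (B(m := Y)) = 0"
proof (rule forces_small_boxesD[OF forces _ Y(4) symmetric_box_function_fix_last[OF sym Y(1)] _ B])
  show "V - Y \<in> sets L01" using V Y by auto
  fix A assume A: "A \<in> {..<m} \<rightarrow> sets L01" "disjoint_family_on A {..<m}"
    "\<forall>i<m. A i \<subseteq> V - Y \<and> vol (A i) = \<beta> i"
  show "\<Phi> (A(m := Y)) = 0"
  proof (rule vanish)
    show "A(m := Y) \<in> {..<Suc m} \<rightarrow> sets L01" using A Y by (auto simp: Pi_iff less_Suc_eq)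
    show "disjoint_family_on (A(m := Y)) {..<Suc m}"
    proof (unfold disjoint_family_on_def, intro ballI impI)
      fix p q assume "p \<in> {..<Suc m}" "q \<in> {..<Suc m}" "p \<noteq> q"
      then show "(A(m := Y)) p \<inter> (A(m := Y)) q = {}"
        using A(3) disjoint_family_onD[OF A(2), of p q] by (auto simp: less_Suc_eq)
    qed
    show "\<forall>i<Suc m. (A(m := Y)) i \<subseteq> V \<and> vol ((A(m := Y)) i) = \<beta> i"
      using A Y by (auto simp: less_Suc_eq)
  qed
qed

text \<open>The last side is free to move in the complement \<open>W\<close> of the others, which has measure
  \<open>> \<beta> m\<close> because the other sides are small.\<close>
lemma forces_small_boxes_Suc:
  assumes forces: "forces_small_boxes m \<beta> \<delta>'" and pos: "0 < \<beta> m"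
    and \<delta>: "0 < \<delta>" "\<delta> \<le> \<delta>'" "real m * \<delta> < (\<Sum>i<m. \<beta> i)"
  shows "forces_small_boxes (Suc m) \<beta> \<delta>"
proof (rule forces_small_boxesI)
  fix V B and \<Phi> :: "(nat \<Rightarrow> real set) \<Rightarrow> complex"
  assume V: "V \<in> sets L01" "vol V = (\<Sum>i<Suc m. \<beta> i)" and sym: "symmetric_box_function (Suc m) \<Phi>"
    and vanish: "\<And>A. A \<in> {..<Suc m} \<rightarrow> sets L01 \<Longrightarrow> disjoint_family_on A {..<Suc m}
      \<Longrightarrow> \<forall>i<Suc m. A i \<subseteq> V \<and> vol (A i) = \<beta> i \<Longrightarrow> \<Phi> A = 0"
    and B: "B \<in> {..<Suc m} \<rightarrow> sets L01" "disjoint_family_on B {..<Suc m}"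
      "\<forall>i<Suc m. B i \<subseteq> V \<and> vol (B i) \<le> \<delta>"
  interpret symmetric_box_function "Suc m" \<Phi> by fact
  define W where "W = V - (\<Union>l<m. B l)"
  have W: "W \<in> sets L01" unfolding W_def using V B by (intro sets.Diff sets.finite_UN) auto
  have "vol V - (\<Sum>l<m. vol (B l)) \<le> vol W"
    unfolding W_def by (rule vol_Diff_UN_ge[OF V(1)]) (use B in auto)
  moreover have "(\<Sum>l<m. vol (B l)) \<le> real m * \<delta>"
    using sum_mono[of "{..<m}" "\<lambda>l. vol (B l)" "\<lambda>_. \<delta>"] B(3) by simp
  ultimately have \<beta>_W: "\<beta> m < vol W" using V(2) \<delta>(3) by simp
  have "B m \<inter> B l = {}" if "l < m" for l
    using B(2)[unfolded disjoint_family_on_def, rule_format, of m l] that by auto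
  then have Bm: "B m \<in> sets L01" "B m \<subseteq> W"
    using B by (auto simp: W_def)
  have "\<Phi> (B(m := B m)) = 0"
  proof (rule side_vanishes[OF _ B(1) W pos \<beta>_W _ Bm])
    fix Y assume Y: "Y \<in> sets L01" "Y \<subseteq> W" "vol Y = \<beta> m"
    show "\<Phi> (B(m := Y)) = 0"
    proof (rule forces_small_boxes_fix_last[OF forces sym vanish V(1) Y(1) _ Y(3)])
      show "Y \<subseteq> V" "vol (V - Y) = (\<Sum>i<m. \<beta> i)"
        using L01.finite_measure_Diff[OF V(1) Y(1)] V Y by (auto simp: W_def)
      show "B \<in> {..<m} \<rightarrow> sets L01" using B by auto
      show "disjoint_family_on B {..<m}" by (rule disjoint_family_on_mono[OF _ B(2)]) auto
      show "\<forall>i<m. B i \<subseteq> V - Y \<and> vol (B i) \<le> \<delta>'"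
      proof (intro allI impI)
        fix i assume "i < m"
        then have "B i \<subseteq> V" "vol (B i) \<le> \<delta>" "B i \<inter> Y = {}"
          using B(3) Y(2) by (auto simp: W_def)
        then show "B i \<subseteq> V - Y \<and> vol (B i) \<le> \<delta>'" using \<delta> by auto
      qed
    qed
  qed simp
  then show "\<Phi> B = 0" by simp
qed

lemma exists_forces_small_boxes:
  assumes "2 \<le> m" "\<forall>i<m. 0 < \<beta> i" "\<exists>i<m. \<exists>j<m. \<beta> i \<noteq> \<beta> j"
  shows "\<exists>\<delta>>0. forces_small_boxes m \<beta> \<delta>"
  using assms
proof (induction m arbitrary: \<beta> rule: nat_induct_at_least)
  case base
  then have "\<beta> 0 \<noteq> \<beta> 1" "0 < \<beta> 0" "0 < \<beta> 1" by (auto simp: less_2_cases_iff)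
  then show ?case using forces_small_boxes_two[of \<beta>] by (intro exI[of _ "min (\<beta> 0) (\<beta> 1) / 4"]) auto
next
  case (Suc m)
  obtain i j where ij: "i < Suc m" "j < Suc m" "\<beta> i \<noteq> \<beta> j" using Suc.prems(2) by blast
  obtain k where k: "k < Suc m" "k \<noteq> i" "k \<noteq> j"
  proof -
    have "\<exists>k\<in>{0, 1, 2::nat}. k \<noteq> i \<and> k \<noteq> j" by auto
    then obtain k where "k \<in> {0, 1, 2::nat}" "k \<noteq> i" "k \<noteq> j" by blast
    moreover have "k < Suc m" using calculation(1) Suc.hyps by auto
    ultimately show ?thesis using that by blast
  qed
  text \<open>Move a coordinate other than \<open>i, j\<close> to the last place, so that \<open>\<beta>\<close> is still
    nonconstant on the first \<open>m\<close> coordinates.\<close>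
  define \<tau> where "\<tau> = Transposition.transpose k m"
  have \<tau>: "\<tau> permutes {..<Suc m}" unfolding \<tau>_def using k by (intro permutes_swap_id) auto
  define \<beta>' where "\<beta>' = \<beta> \<circ> \<tau>"
  have pos': "\<forall>l<Suc m. 0 < \<beta>' l"
    using Suc.prems(1) permutes_in_image[OF \<tau>] by (simp add: \<beta>'_def)
  have "\<tau> i < m" "\<tau> j < m" "\<beta>' (\<tau> i) \<noteq> \<beta>' (\<tau> j)"
    using ij k by (auto simp: \<tau>_def \<beta>'_def Transposition.transpose_def)
  then obtain \<delta>' where \<delta>': "\<delta>' > 0" "forces_small_boxes m \<beta>' \<delta>'"
    using Suc.IH[of \<beta>'] pos' by auto
  define s where "s = (\<Sum>l<m. \<beta>' l)"
  have s: "s > 0" unfolding s_def using pos' Suc.hyps by (intro sum_pos) (auto simp: lessThan_empty_iff)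
  define \<delta> where "\<delta> = min \<delta>' (s / (2 * real m))"
  have \<delta>: "0 < \<delta>" "\<delta> \<le> \<delta>'" "real m * \<delta> < s"
  proof -
    show "0 < \<delta>" "\<delta> \<le> \<delta>'" using \<delta>' s Suc.hyps by (auto simp: \<delta>_def)
    have "real m * \<delta> \<le> s / 2"
      using Suc.hyps mult_left_mono[of \<delta> "s / (2 * real m)" "real m"] by (simp add: \<delta>_def)
    then show "real m * \<delta> < s" using s by simp
  qed
  have "forces_small_boxes (Suc m) (\<beta> \<circ> \<tau>) \<delta>"
    using forces_small_boxes_Suc[OF \<delta>'(2) _ \<delta>[unfolded s_def]] pos' by (simp add: \<beta>'_def comp_def)
  then show ?case using forces_small_boxes_permute[OF \<tau>] \<delta>(1) by auto
qed

section \<open>Integrals over boxes\<close>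

lemma integral_norm_truncation_tendsto_0:
  fixes f :: "'a \<Rightarrow> 'b::{banach, second_countable_topology}"
  assumes f: "integrable M f"
  shows "(\<lambda>n. \<integral>x. norm (f x) - min (norm (f x)) (real n) \<partial>M) \<longlonglongrightarrow> 0"
proof -
  have "(\<lambda>n. \<integral>x. norm (f x) - min (norm (f x)) (real n) \<partial>M) \<longlonglongrightarrow> integral\<^sup>L M (\<lambda>x. 0::real)"
  proof (rule integral_dominated_convergence[where w = "\<lambda>x. norm (f x)"])
    show "AE x in M. (\<lambda>n. norm (f x) - min (norm (f x)) (real n)) \<longlonglongrightarrow> 0"
    proof (rule AE_I2)
      fix x
      obtain N where "norm (f x) \<le> real N" using real_arch_simple by blast
      then have "\<forall>\<^sub>F n in sequentially. norm (f x) - min (norm (f x)) (real n) = 0"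
        unfolding eventually_sequentially by (intro exI[of _ N]) auto
      then show "(\<lambda>n. norm (f x) - min (norm (f x)) (real n)) \<longlonglongrightarrow> 0" by (rule tendsto_eventually)
    qed
  qed (use f in auto)
  then show ?thesis by simp
qed

text \<open>Absolute continuity of the integral: split \<open>\<parallel>f\<parallel>\<close> into its truncation at height \<open>n\<close>,
  whose integral over \<open>A\<close> is at most \<open>n \<cdot> measure M A\<close>, and a remainder of small integral.\<close>
lemma absolutely_continuous_integral:
  fixes f :: "'a \<Rightarrow> 'b::{banach, second_countable_topology}"
  assumes "finite_measure M" and f: "integrable M f" and e: "e > 0"
  shows "\<exists>d>0. \<forall>A\<in>sets M. measure M A < d \<longrightarrow> (\<integral>x. norm (f x) * indicator A x \<partial>M) < e"
proof -
  interpret finite_measure M by fact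
  define g where "g x = norm (f x)" for x
  define h where "h n x = g x - min (g x) (real n)" for n x
  have g: "integrable M g" unfolding g_def using f by (rule integrable_norm)
  have min_int: "integrable M (\<lambda>x. min (g x) (real n))" for n
    using g by (intro Bochner_Integration.integrable_min integrable_const)
  have h_int: "integrable M (h n)" for n
    unfolding h_def using g min_int by (rule Bochner_Integration.integrable_diff)
  have "\<forall>\<^sub>F n in sequentially. integral\<^sup>L M (h n) < e / 2"
    using integral_norm_truncation_tendsto_0[OF f] e unfolding h_def g_def
    by (intro order_tendstoD) auto
  then obtain n where n: "integral\<^sup>L M (h n) < e / 2" by (auto simp: eventually_sequentially)
  define d where "d = e / (2 * (real n + 1))"
  show ?thesis
  proof (intro exI[of _ d] conjI ballI impI)
    show "d > 0" using e by (simp add: d_def)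
    fix A assume A: "A \<in> sets M" "measure M A < d"
    have i1: "integrable M (\<lambda>x. min (g x) (real n) * indicator A x)"
      using A min_int by (intro integrable_real_mult_indicator)
    have i2: "integrable M (\<lambda>x. h n x * indicator A x)"
      using A h_int by (intro integrable_real_mult_indicator)
    have i3: "integrable M (\<lambda>x. real n * indicator A x)"
      using A by (intro integrable_real_mult_indicator integrable_const)
    have "(\<integral>x. g x * indicator A x \<partial>M)
        = (\<integral>x. min (g x) (real n) * indicator A x + h n x * indicator A x \<partial>M)"
      by (simp add: h_def algebra_simps)
    also have "\<dots> = (\<integral>x. min (g x) (real n) * indicator A x \<partial>M) + (\<integral>x. h n x * indicator A x \<partial>M)"
      using i1 i2 by (rule Bochner_Integration.integral_add)
    also have "(\<integral>x. min (g x) (real n) * indicator A x \<partial>M) \<le> (\<integral>x. real n * indicator A x \<partial>M)"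
      using i1 i3 by (intro integral_mono) (auto simp: indicator_def)
    also have "(\<integral>x. h n x * indicator A x \<partial>M) \<le> integral\<^sup>L M (h n)"
      using i2 h_int by (intro integral_mono) (auto simp: indicator_def h_def)
    also have "(\<integral>x. real n * indicator A x \<partial>M) \<le> e / 2"
    proof -
      have "(\<integral>x. real n * indicator A x \<partial>M) = real n * measure M A" using A by simp
      also have "\<dots> \<le> real n * d" using A by (intro mult_left_mono) auto
      also have "\<dots> \<le> e / 2" using e by (simp add: d_def field_simps)
      finally show ?thesis .
    qed
    finally show "(\<integral>x. norm (f x) * indicator A x \<partial>M) < e" using n by (simp add: g_def)
  qed
qed

lemma norm_set_integral_le:
  fixes f :: "'a \<Rightarrow> 'b::{banach, second_countable_topology}"
  shows "norm (LINT x:A|M. f x) \<le> (\<integral>x. norm (f x) * indicator A x \<partial>M)"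
proof -
  have "norm (LINT x:A|M. f x) \<le> (\<integral>x. norm (indicator A x *\<^sub>R f x) \<partial>M)"
    unfolding set_lebesgue_integral_def by (rule integral_norm_bound)
  also have "\<dots> = (\<integral>x. norm (f x) * indicator A x \<partial>M)"
    by (intro Bochner_Integration.integral_cong) (auto simp: indicator_def)
  finally show ?thesis .
qed

lemma prod_le_factor:
  fixes x :: "'a \<Rightarrow> real"
  assumes "finite I" "k \<in> I" "\<And>i. i \<in> I \<Longrightarrow> 0 \<le> x i \<and> x i \<le> 1"
  shows "(\<Prod>i\<in>I. x i) \<le> x k"
proof -
  have "(\<Prod>i\<in>I. x i) = x k * (\<Prod>i\<in>I - {k}. x i)" using assms by (simp add: prod.remove)
  also have "\<dots> \<le> x k * 1" using assms by (intro mult_left_mono prod_le_1) auto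
  finally show ?thesis by simp
qed

lemma prob_space_unit_cube: "prob_space (unit_cube m)"
  unfolding unit_cube_def by (intro prob_space_PiM prob_space_L01)

lemma space_unit_cube: "space (unit_cube m) = (\<Pi>\<^sub>E i\<in>{..<m}. {0..1})"
  by (simp add: unit_cube_def space_PiM)

lemma box_in_sets_unit_cube: "E \<in> {..<m} \<rightarrow> sets L01 \<Longrightarrow> (\<Pi>\<^sub>E i\<in>{..<m}. E i) \<in> sets (unit_cube m)"
  unfolding unit_cube_def by (intro sets_PiM_I_finite) auto

lemma measure_box_unit_cube:
  assumes "E \<in> {..<m} \<rightarrow> sets L01"
  shows "measure (unit_cube m) (\<Pi>\<^sub>E i\<in>{..<m}. E i) = (\<Prod>i<m. vol (E i))"
proof -
  have "finite_product_prob_space (\<lambda>_. L01) {..<m}"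
    unfolding finite_product_prob_space_def finite_product_sigma_finite_def product_prob_space_def
      product_prob_space_axioms_def product_sigma_finite_def finite_product_sigma_finite_axioms_def
    by (simp add: prob_space_L01 prob_space_imp_sigma_finite)
  from finite_product_prob_space.finite_measure_PiM_emb[OF this] show ?thesis
    using assms unfolding unit_cube_def by auto
qed

lemma set_integrable_of_integrable:
  fixes f :: "'a \<Rightarrow> 'b::{banach, second_countable_topology}"
  shows "A \<in> sets M \<Longrightarrow> integrable M f \<Longrightarrow> set_integrable M A f"
  unfolding set_integrable_def by (rule integrable_mult_indicator)

abbreviation box_integral ::
    "nat \<Rightarrow> ((nat \<Rightarrow> real) \<Rightarrow> 'b::{banach, second_countable_topology}) \<Rightarrow> (nat \<Rightarrow> real set) \<Rightarrow> 'b" where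
  "box_integral m f E \<equiv> (\<integral>x\<in>(\<Pi>\<^sub>E i\<in>{..<m}. E i). f x \<partial>unit_cube m)"

lemma box_function_box_integral:
  assumes f: "integrable (unit_cube m) f"
  shows "box_function m (box_integral m f)"
proof
  fix E k X Y assume k: "k < m" and E: "E \<in> {..<m} \<rightarrow> sets L01"
    and XY: "X \<in> sets L01" "Y \<in> sets L01" "X \<inter> Y = {}"
  have sets: "(\<Pi>\<^sub>E i\<in>{..<m}. (E(k := Z)) i) \<in> sets (unit_cube m)" if "Z \<in> sets L01" for Z
    using E that by (intro box_in_sets_unit_cube) (auto simp: Pi_iff)
  have "(\<Pi>\<^sub>E i\<in>{..<m}. (E(k := X \<union> Y)) i)
      = (\<Pi>\<^sub>E i\<in>{..<m}. (E(k := X)) i) \<union> (\<Pi>\<^sub>E i\<in>{..<m}. (E(k := Y)) i)"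
    using k unfolding PiE_def Pi_def by auto
  moreover have "(\<Pi>\<^sub>E i\<in>{..<m}. (E(k := X)) i) \<inter> (\<Pi>\<^sub>E i\<in>{..<m}. (E(k := Y)) i) = {}"
    using k XY(3) unfolding PiE_def Pi_def by auto
  ultimately show "box_integral m f (E(k := X \<union> Y)) = box_integral m f (E(k := X)) + box_integral m f (E(k := Y))"
    using set_integral_Un set_integrable_of_integrable[OF sets[OF XY(1)] f]
      set_integrable_of_integrable[OF sets[OF XY(2)] f] by metis
next
  fix e :: real assume e: "e > 0"
  interpret prob_space "unit_cube m" by (rule prob_space_unit_cube)
  obtain d where d: "d > 0" "\<forall>A\<in>sets (unit_cube m). measure (unit_cube m) A < d
      \<longrightarrow> (\<integral>x. norm (f x) * indicator A x \<partial>unit_cube m) < e"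
    using absolutely_continuous_integral[OF finite_measure_axioms f e] by blast
  have "norm (box_integral m f E) < e" if "k < m" "E \<in> {..<m} \<rightarrow> sets L01" "vol (E k) < d" for E k
  proof -
    have "measure (unit_cube m) (\<Pi>\<^sub>E i\<in>{..<m}. E i) = (\<Prod>i<m. vol (E i))"
      by (rule measure_box_unit_cube[OF that(2)])
    also have "\<dots> \<le> vol (E k)" using that(1) by (intro prod_le_factor) auto
    finally have "(\<integral>x. norm (f x) * indicator (\<Pi>\<^sub>E i\<in>{..<m}. E i) x \<partial>unit_cube m) < e"
      using d(2) box_in_sets_unit_cube[OF that(2)] that(3) by simp
    with norm_set_integral_le show ?thesis by (rule le_less_trans)
  qed
  with d(1) show "\<exists>d>0. \<forall>E k. k < m \<longrightarrow> E \<in> {..<m} \<rightarrow> sets L01 \<longrightarrow> vol (E k) < d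
      \<longrightarrow> norm (box_integral m f E) < e"
    by blast
qed

lemma comp_permutes_in_PiE_iff:
  assumes \<sigma>: "\<sigma> permutes I" and x: "x \<in> extensional I"
  shows "x \<circ> \<sigma> \<in> PiE I E \<longleftrightarrow> x \<in> PiE I (E \<circ> inv \<sigma>)"
proof -
  have "x \<circ> \<sigma> \<in> extensional I" using x permutes_not_in[OF \<sigma>] by (auto simp: extensional_def)
  moreover have "(\<forall>i\<in>I. x (\<sigma> i) \<in> E i) \<longleftrightarrow> (\<forall>j\<in>I. x j \<in> E (inv \<sigma> j))"
  proof
    assume "\<forall>i\<in>I. x (\<sigma> i) \<in> E i"
    then show "\<forall>j\<in>I. x j \<in> E (inv \<sigma> j)"
      using permutes_in_image[OF permutes_inv[OF \<sigma>]] permutes_inverses(1)[OF \<sigma>] by metis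
  next
    assume "\<forall>j\<in>I. x j \<in> E (inv \<sigma> j)"
    then show "\<forall>i\<in>I. x (\<sigma> i) \<in> E i"
      using permutes_in_image[OF \<sigma>] permutes_inverses(2)[OF \<sigma>] by metis
  qed
  ultimately show ?thesis using x by (auto simp: PiE_iff)
qed

lemma distr_unit_cube_permute:
  assumes \<sigma>: "\<sigma> permutes {..<m}"
  shows "distr (unit_cube m) (unit_cube m) (\<lambda>x. \<lambda>i\<in>{..<m}. x (\<sigma> i)) = unit_cube m"
proof -
  have "inj_on \<sigma> {..<m}" using permutes_inj_on[OF \<sigma>] .
  moreover have "\<sigma> \<in> {..<m} \<rightarrow> {..<m}" using permutes_in_image[OF \<sigma>] by auto
  ultimately show ?thesis
    using distr_PiM_reindex[of "{..<m}" "\<lambda>_. L01" \<sigma> "{..<m}"] prob_space_L01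
    unfolding unit_cube_def by simp
qed

lemma permute_measurable_unit_cube:
  assumes \<sigma>: "\<sigma> permutes {..<m}"
  shows "(\<lambda>x. \<lambda>i\<in>{..<m}. x (\<sigma> i)) \<in> unit_cube m \<rightarrow>\<^sub>M unit_cube m"
  unfolding unit_cube_def
proof (rule measurable_restrict)
  fix i assume "i \<in> {..<m}"
  then have "\<sigma> i \<in> {..<m}" using permutes_in_image[OF \<sigma>] by auto
  then show "(\<lambda>x. x (\<sigma> i)) \<in> Pi\<^sub>M {..<m} (\<lambda>_. L01) \<rightarrow>\<^sub>M L01"
    by (rule measurable_component_singleton)
qed

lemma box_integral_permute:
  fixes f :: "(nat \<Rightarrow> real) \<Rightarrow> 'b::{banach, second_countable_topology}"
  assumes \<sigma>: "\<sigma> permutes {..<m}" and sym: "\<forall>x\<in>space (unit_cube m). f (x \<circ> \<sigma>) = f x"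
    and f: "integrable (unit_cube m) f" and E: "E \<in> {..<m} \<rightarrow> sets L01"
  shows "box_integral m f (E \<circ> inv \<sigma>) = box_integral m f E"
proof -
  let ?T = "\<lambda>x. \<lambda>i\<in>{..<m}. x (\<sigma> i)"
  let ?g = "\<lambda>x. indicator (\<Pi>\<^sub>E i\<in>{..<m}. E i) x *\<^sub>R f x"
  have "?g \<in> borel_measurable (unit_cube m)"
    using f box_in_sets_unit_cube[OF E] by measurable
  then have "box_integral m f E = (\<integral>x. ?g (?T x) \<partial>unit_cube m)"
    unfolding set_lebesgue_integral_def
    by (subst (1) distr_unit_cube_permute[OF \<sigma>, symmetric])
      (rule integral_distr[OF permute_measurable_unit_cube[OF \<sigma>]])
  also have "\<dots> = box_integral m f (E \<circ> inv \<sigma>)"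
    unfolding set_lebesgue_integral_def
  proof (rule Bochner_Integration.integral_cong[OF refl])
    fix x assume x: "x \<in> space (unit_cube m)"
    then have ext: "x \<in> extensional {..<m}" by (simp add: space_unit_cube PiE_def)
    then have Tx: "?T x = x \<circ> \<sigma>"
      using permutes_not_in[OF \<sigma>] by (auto simp: extensional_def fun_eq_iff)
    show "?g (?T x) = indicator (\<Pi>\<^sub>E i\<in>{..<m}. (E \<circ> inv \<sigma>) i) x *\<^sub>R f x"
      unfolding Tx using comp_permutes_in_PiE_iff[OF \<sigma> ext] sym x
      by (simp add: indicator_def o_def)
  qed
  finally show ?thesis ..
qed

lemma symmetric_box_function_box_integral:
  fixes f :: "(nat \<Rightarrow> real) \<Rightarrow> 'b::{banach, second_countable_topology}"
  assumes f: "integrable (unit_cube m) f"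
    and sym: "\<forall>\<sigma>. \<sigma> permutes {..<m} \<longrightarrow> (\<forall>x\<in>space (unit_cube m). f (x \<circ> \<sigma>) = f x)"
  shows "symmetric_box_function m (box_integral m f)"
proof -
  interpret box_function m "box_integral m f" by (rule box_function_box_integral[OF f])
  show ?thesis
  proof
    fix \<sigma> E assume \<sigma>: "\<sigma> permutes {..<m}" and E: "E \<in> {..<m} \<rightarrow> sets L01"
    have "box_integral m f (E \<circ> \<sigma> \<circ> inv \<sigma>) = box_integral m f (E \<circ> \<sigma>)"
      using sym \<sigma> permutes_comp_in_funcset[OF \<sigma> E] by (intro box_integral_permute[OF \<sigma> _ f]) auto
    moreover have "E \<circ> \<sigma> \<circ> inv \<sigma> = E" using permutes_inv_o(1)[OF \<sigma>] by (simp add: comp_assoc)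
    ultimately show "box_integral m f (E \<circ> \<sigma>) = box_integral m f E" by simp
  qed
qed

section \<open>Cutting boxes along a grid\<close>

definition grid_cell :: "nat \<Rightarrow> nat \<Rightarrow> real set" where
  "grid_cell n k = {t \<in> {0..1}. nat \<lfloor>real n * t\<rfloor> = k}"

lemma grid_cell_in_sets: "grid_cell n k \<in> sets L01"
proof -
  have "{t. nat \<lfloor>real n * t\<rfloor> = k} \<in> sets borel" by measurable
  moreover note unit_interval_in_sets_L01
  moreover have "grid_cell n k = {0..1} \<inter> {t. nat \<lfloor>real n * t\<rfloor> = k}"
    by (auto simp: grid_cell_def)
  ultimately show ?thesis using sets_L01_Int_borel by simp
qed

lemma vol_grid_cell:
  assumes n: "0 < n"
  shows "vol (grid_cell n k) \<le> 1 / real n"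
proof -
  have n': "0 < real n" using n by simp
  have "grid_cell n k \<subseteq> {real k / real n .. (real k + 1) / real n}"
  proof
    fix t assume "t \<in> grid_cell n k"
    then have "0 \<le> real n * t" "nat \<lfloor>real n * t\<rfloor> = k" by (auto simp: grid_cell_def)
    then have "\<lfloor>real n * t\<rfloor> = int k" by linarith
    then have "real k \<le> real n * t" "real n * t < real k + 1" by (simp_all add: floor_eq_iff)
    then show "t \<in> {real k / real n .. (real k + 1) / real n}"
      using n' by (simp add: divide_le_eq le_divide_eq mult.commute)
  qed
  moreover have "real k / real n \<le> (real k + 1) / real n"
    using n' by (intro divide_right_mono) auto
  ultimately have "vol (grid_cell n k) \<le> (real k + 1) / real n - real k / real n"
    by (intro vol_le_interval_length grid_cell_in_sets)
  also have "\<dots> = 1 / real n" by (simp add: diff_divide_distrib[symmetric])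
  finally show ?thesis .
qed

lemma grid_cells_disjoint: "l \<noteq> l' \<Longrightarrow> grid_cell n l \<inter> grid_cell n l' = {}"
  by (auto simp: grid_cell_def)

definition near_diagonal :: "nat \<Rightarrow> nat \<Rightarrow> (nat \<Rightarrow> real) set" where
  "near_diagonal m n = (\<Union>(i, j, l) \<in> {(i, j, l). i < m \<and> j < m \<and> i \<noteq> j \<and> l \<le> n}.
     \<Pi>\<^sub>E r\<in>{..<m}. if r = i \<or> r = j then grid_cell n l else {0..1})"

lemma near_diagonal_iff:
  "x \<in> near_diagonal m n \<longleftrightarrow>
    x \<in> space (unit_cube m) \<and> (\<exists>i<m. \<exists>j<m. i \<noteq> j \<and> nat \<lfloor>real n * x i\<rfloor> = nat \<lfloor>real n * x j\<rfloor>)"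
proof
  assume "x \<in> near_diagonal m n"
  then obtain i j l where ij: "i < m" "j < m" "i \<noteq> j"
    and x: "x \<in> (\<Pi>\<^sub>E r\<in>{..<m}. if r = i \<or> r = j then grid_cell n l else {0..1})"
    by (auto simp: near_diagonal_def)
  have "x r \<in> {0..1}" if "r < m" for r
    using PiE_mem[OF x, of r] that by (auto simp: grid_cell_def split: if_splits)
  then have "x \<in> space (unit_cube m)" using x by (auto simp: space_unit_cube PiE_iff)
  moreover have "x i \<in> grid_cell n l" "x j \<in> grid_cell n l"
    using PiE_mem[OF x, of i] PiE_mem[OF x, of j] ij by auto
  ultimately show "x \<in> space (unit_cube m) \<and>
      (\<exists>i<m. \<exists>j<m. i \<noteq> j \<and> nat \<lfloor>real n * x i\<rfloor> = nat \<lfloor>real n * x j\<rfloor>)"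
    using ij by (auto simp: grid_cell_def)
next
  assume "x \<in> space (unit_cube m) \<and>
      (\<exists>i<m. \<exists>j<m. i \<noteq> j \<and> nat \<lfloor>real n * x i\<rfloor> = nat \<lfloor>real n * x j\<rfloor>)"
  then obtain i j where x: "x \<in> (\<Pi>\<^sub>E r\<in>{..<m}. {0..1})" and ij: "i < m" "j < m" "i \<noteq> j"
    "nat \<lfloor>real n * x i\<rfloor> = nat \<lfloor>real n * x j\<rfloor>"
    by (auto simp: space_unit_cube)
  define l where "l = nat \<lfloor>real n * x i\<rfloor>"
  have "x i \<le> 1" using x ij by (auto simp: PiE_iff)
  then have "real n * x i \<le> real n" by (simp add: mult_left_le)
  then have "l \<le> n" unfolding l_def by linarith
  moreover have "x \<in> (\<Pi>\<^sub>E r\<in>{..<m}. if r = i \<or> r = j then grid_cell n l else {0..1})"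
    using x ij by (auto simp: PiE_iff grid_cell_def l_def)
  ultimately show "x \<in> near_diagonal m n" using ij unfolding near_diagonal_def by blast
qed

lemma near_diagonal_in_sets: "near_diagonal m n \<in> sets (unit_cube m)"
proof -
  have "finite {(i, j, l). i < m \<and> j < m \<and> i \<noteq> j \<and> l \<le> n}"
    by (rule finite_subset[of _ "{..<m} \<times> {..<m} \<times> {..n}"]) auto
  moreover have "(\<Pi>\<^sub>E r\<in>{..<m}. if r = i \<or> r = j then grid_cell n l else {0..1}) \<in> sets (unit_cube m)"
    for i j l
    by (rule box_in_sets_unit_cube) (auto simp: grid_cell_in_sets unit_interval_in_sets_L01)
  ultimately show ?thesis unfolding near_diagonal_def by auto
qed

lemma prod_le_two_factors:
  fixes x :: "'a \<Rightarrow> real"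
  assumes "finite I" "i \<in> I" "j \<in> I" "i \<noteq> j" "\<And>r. r \<in> I \<Longrightarrow> 0 \<le> x r \<and> x r \<le> 1"
  shows "(\<Prod>r\<in>I. x r) \<le> x i * x j"
proof -
  have "(\<Prod>r\<in>I. x r) = x i * (\<Prod>r\<in>I - {i}. x r)" using assms by (simp add: prod.remove)
  also have "\<dots> \<le> x i * x j" using assms by (intro mult_left_mono prod_le_factor) auto
  finally show ?thesis .
qed

lemma measure_near_diagonal:
  assumes n: "0 < n"
  shows "measure (unit_cube m) (near_diagonal m n) \<le> 2 * real m ^ 2 / real n"
proof -
  define G where "G = {(i, j, l). i < m \<and> j < m \<and> i \<noteq> j \<and> l \<le> n}"
  define C where "C = (\<lambda>(i, j, l). \<Pi>\<^sub>E r\<in>{..<m}. if r = i \<or> r = j then grid_cell n l else {0..1})"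
  have G: "G \<subseteq> {..<m} \<times> {..<m} \<times> {..n}" by (auto simp: G_def)
  then have "finite G" by (rule finite_subset) auto
  have "real (card G) \<le> real (card ({..<m} \<times> {..<m} \<times> {..n}))"
    using G by (intro of_nat_mono card_mono) auto
  then have card_G: "real (card G) \<le> real m * real m * (real n + 1)"
    by (simp add: card_cartesian_product algebra_simps)
  have sides: "(\<lambda>r. if r = i \<or> r = j then grid_cell n l else {0..1}) \<in> {..<m} \<rightarrow> sets L01" for i j l
    by (auto simp: grid_cell_in_sets unit_interval_in_sets_L01)
  have C_sets: "C g \<in> sets (unit_cube m)" for g
  proof (cases g)
    case (fields i j l)
    then show ?thesis unfolding C_def using box_in_sets_unit_cube[OF sides[of i j l]] by simp
  qed
  have measure_C: "measure (unit_cube m) (C g) \<le> 1 / real n * (1 / real n)" if gG: "g \<in> G" for g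
  proof -
    obtain i j l where g: "g = (i, j, l)" "i < m" "j < m" "i \<noteq> j"
      using gG unfolding G_def by blast
    let ?x = "\<lambda>r. vol (if r = i \<or> r = j then grid_cell n l else {0..1})"
    have "measure (unit_cube m) (C g) = (\<Prod>r<m. ?x r)"
      unfolding g(1) C_def by (simp add: measure_box_unit_cube[OF sides])
    also have "\<dots> \<le> ?x i * ?x j" using g by (intro prod_le_two_factors) auto
    also have "\<dots> \<le> 1 / real n * (1 / real n)"
      using vol_grid_cell[OF n, of l] by (intro mult_mono) auto
    finally show ?thesis .
  qed
  have "measure (unit_cube m) (near_diagonal m n) \<le> (\<Sum>g\<in>G. measure (unit_cube m) (C g))"
    unfolding near_diagonal_def G_def[symmetric] C_def[symmetric]
    by (rule measure_UNION_le[OF \<open>finite G\<close>]) (use C_sets in auto)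
  also have "\<dots> \<le> real (card G) * (1 / real n * (1 / real n))"
    using sum_mono[OF measure_C] by simp
  also have "\<dots> \<le> real m * real m * (real n + 1) * (1 / real n * (1 / real n))"
    using card_G by (intro mult_right_mono) auto
  also have "\<dots> \<le> real m * real m * (2 * real n) * (1 / real n * (1 / real n))"
    using n by (intro mult_right_mono mult_left_mono) auto
  also have "\<dots> = 2 * real m ^ 2 / real n" using n by (simp add: power2_eq_square)
  finally show ?thesis .
qed



lemma box_diff_near_diagonal:
  assumes E: "E \<in> {..<m} \<rightarrow> sets L01"
  shows "(\<Pi>\<^sub>E i\<in>{..<m}. E i) - near_diagonal m n =
    (\<Union>k\<in>{k \<in> \<Pi>\<^sub>E i\<in>{..<m}. {..n}. inj_on k {..<m}}. \<Pi>\<^sub>E i\<in>{..<m}. E i \<inter> grid_cell n (k i))"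
    (is "?box - _ = (\<Union>k\<in>?K. ?P k)")
proof (intro equalityI subsetI)
  define cell where "cell t = nat \<lfloor>real n * t\<rfloor>" for t :: real
  have box_sub: "?box \<subseteq> space (unit_cube m)"
    unfolding space_unit_cube using E sets_L01_subset by (intro PiE_mono) auto
  fix x assume x: "x \<in> ?box - near_diagonal m n"
  then have x_box: "x \<in> ?box" and x_space: "x \<in> space (unit_cube m)" using box_sub by blast+
  have x01: "x i \<in> {0..1}" if "i < m" for i
    using PiE_mem[OF x_space[unfolded space_unit_cube], of i] that by simp
  have "\<not> (\<exists>i<m. \<exists>j<m. i \<noteq> j \<and> cell (x i) = cell (x j))"
    using x x_space near_diagonal_iff[of x m n] unfolding cell_def by blast
  then have distinct: "cell (x i) \<noteq> cell (x j)" if "i < m" "j < m" "i \<noteq> j" for i j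
    using that by blast
  have cell_le: "cell t \<le> n" if "t \<in> {0..1}" for t
  proof -
    have "real n * t \<le> real n" using that by (simp add: mult_left_le)
    then show ?thesis unfolding cell_def by linarith
  qed
  define k where "k = (\<lambda>i\<in>{..<m}. cell (x i))"
  have "inj_on k {..<m}" using distinct by (auto simp: inj_on_def k_def)
  moreover have "k \<in> (\<Pi>\<^sub>E i\<in>{..<m}. {..n})"
    unfolding k_def restrict_PiE_iff using x01 cell_le by simp
  ultimately have "k \<in> ?K" by simp
  moreover have "x i \<in> E i \<inter> grid_cell n (k i)" if "i < m" for i
    using PiE_mem[OF x_box, of i] x01[OF that] that by (simp add: grid_cell_def k_def cell_def)
  then have "x \<in> ?P k" using x_box unfolding PiE_iff by simp
  ultimately show "x \<in> (\<Union>k\<in>?K. ?P k)" by blast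
next
  fix x assume "x \<in> (\<Union>k\<in>?K. ?P k)"
  then obtain k where k: "k \<in> ?K" and x: "x \<in> ?P k" by blast
  have "nat \<lfloor>real n * x i\<rfloor> = k i" if "i < m" for i
    using PiE_mem[OF x, of i] that by (auto simp: grid_cell_def)
  then have "x \<notin> near_diagonal m n"
    using k by (auto simp: near_diagonal_iff inj_on_def)
  moreover have "x \<in> ?box" using x by (auto simp: PiE_iff)
  ultimately show "x \<in> ?box - near_diagonal m n" by blast
qed

text \<open>The cells of \<open>box_diff_near_diagonal\<close> are disjoint boxes with sides \<open>\<le> 1 / n\<close>.\<close>
lemma box_integral_eq_near_diagonal:
  fixes f :: "(nat \<Rightarrow> real) \<Rightarrow> 'b::{banach, second_countable_topology}"
  assumes f: "integrable (unit_cube m) f" and n: "0 < n"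
    and vanish: "\<And>B. B \<in> {..<m} \<rightarrow> sets L01 \<Longrightarrow> disjoint_family_on B {..<m}
      \<Longrightarrow> \<forall>i<m. vol (B i) \<le> 1 / real n \<Longrightarrow> box_integral m f B = 0"
    and E: "E \<in> {..<m} \<rightarrow> sets L01"
  shows "box_integral m f E = (LINT x:(\<Pi>\<^sub>E i\<in>{..<m}. E i) \<inter> near_diagonal m n|unit_cube m. f x)"
proof -
  define K where "K = {k \<in> \<Pi>\<^sub>E i\<in>{..<m}. {..n}. inj_on k {..<m}}"
  define P where "P k = (\<Pi>\<^sub>E i\<in>{..<m}. E i \<inter> grid_cell n (k i))" for k
  let ?box = "\<Pi>\<^sub>E i\<in>{..<m}. E i"
  have K: "finite K" unfolding K_def by (rule finite_subset[of _ "\<Pi>\<^sub>E i\<in>{..<m}. {..n}"]) (auto simp: finite_PiE)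
  have P_sides: "(\<lambda>i. E i \<inter> grid_cell n (k i)) \<in> {..<m} \<rightarrow> sets L01" for k
    using E by (auto simp: grid_cell_in_sets)
  have P_sets: "P k \<in> sets (unit_cube m)" for k
    unfolding P_def by (rule box_in_sets_unit_cube[OF P_sides])
  have box_diff: "?box - near_diagonal m n = (\<Union>k\<in>K. P k)"
    unfolding K_def P_def by (rule box_diff_near_diagonal[OF E])
  have disj: "disjoint_family_on P K"
  proof (unfold disjoint_family_on_def, intro ballI impI)
    fix k k' assume kk': "k \<in> K" "k' \<in> K" "k \<noteq> k'"
    then obtain i where i: "i < m" "k i \<noteq> k' i"
      using PiE_ext[of k "{..<m}" "\<lambda>_. {..n}" k'] unfolding K_def by auto
    have "P k \<subseteq> {x. x i \<in> grid_cell n (k i)}" "P k' \<subseteq> {x. x i \<in> grid_cell n (k' i)}"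
      using i(1) by (auto simp: P_def dest: PiE_mem)
    then show "P k \<inter> P k' = {}" using grid_cells_disjoint[OF i(2)] by blast
  qed
  have cells_vanish: "box_integral m f (\<lambda>i. E i \<inter> grid_cell n (k i)) = 0" if k: "k \<in> K" for k
  proof (rule vanish[OF P_sides])
    have "k i \<noteq> k j" if "i < m" "j < m" "i \<noteq> j" for i j
      using k that unfolding K_def inj_on_def by blast
    then show "disjoint_family_on (\<lambda>i. E i \<inter> grid_cell n (k i)) {..<m}"
      unfolding disjoint_family_on_def using grid_cells_disjoint by blast
    have "vol (E i \<inter> grid_cell n (k i)) \<le> vol (grid_cell n (k i))" for i
      by (rule L01.finite_measure_mono[OF Int_lower2 grid_cell_in_sets])
    then show "\<forall>i<m. vol (E i \<inter> grid_cell n (k i)) \<le> 1 / real n"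
      using vol_grid_cell[OF n] order_trans by blast
  qed
  have set_int: "set_integrable (unit_cube m) A f" if "A \<in> sets (unit_cube m)" for A
    using that f by (rule set_integrable_of_integrable)
  have box_sets: "?box \<in> sets (unit_cube m)" by (rule box_in_sets_unit_cube[OF E])
  have "(LINT x:?box - near_diagonal m n|unit_cube m. f x) = (\<Sum>k\<in>K. LINT x:P k|unit_cube m. f x)"
    unfolding box_diff by (rule set_integral_finite_Union[OF K disj]) (simp_all add: set_int P_sets)
  also have "\<dots> = 0" using cells_vanish by (simp add: P_def)
  finally have off_diagonal: "(LINT x:?box - near_diagonal m n|unit_cube m. f x) = 0" .
  have "(LINT x:(?box \<inter> near_diagonal m n) \<union> (?box - near_diagonal m n)|unit_cube m. f x)
      = (LINT x:?box \<inter> near_diagonal m n|unit_cube m. f x) + (LINT x:?box - near_diagonal m n|unit_cube m. f x)"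
    using box_sets near_diagonal_in_sets by (intro set_integral_Un set_int) auto
  moreover have "(?box \<inter> near_diagonal m n) \<union> (?box - near_diagonal m n) = ?box" by blast
  ultimately show ?thesis using off_diagonal by simp
qed

lemma box_integral_vanishes:
  fixes f :: "(nat \<Rightarrow> real) \<Rightarrow> 'b::{banach, second_countable_topology}"
  assumes f: "integrable (unit_cube m) f" and \<delta>: "\<delta> > 0"
    and vanish: "\<And>B. B \<in> {..<m} \<rightarrow> sets L01 \<Longrightarrow> disjoint_family_on B {..<m}
      \<Longrightarrow> \<forall>i<m. vol (B i) \<le> \<delta> \<Longrightarrow> box_integral m f B = 0"
    and E: "E \<in> {..<m} \<rightarrow> sets L01"
  shows "box_integral m f E = 0"
proof -
  interpret prob_space "unit_cube m" by (rule prob_space_unit_cube)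
  have "norm (box_integral m f E) < e" if e: "e > 0" for e
  proof -
    obtain d where d: "d > 0" "\<forall>A\<in>sets (unit_cube m). measure (unit_cube m) A < d
        \<longrightarrow> (\<integral>x. norm (f x) * indicator A x \<partial>unit_cube m) < e"
      using absolutely_continuous_integral[OF finite_measure_axioms f e] by blast
    define n where "n = nat \<lceil>max (1 / \<delta>) (2 * real m ^ 2 / d)\<rceil> + 1"
    have n: "0 < n" "1 / \<delta> < real n" "2 * real m ^ 2 / d < real n" unfolding n_def by linarith+
    have "1 / real n \<le> \<delta>" using n \<delta> by (simp add: field_simps)
    then have "box_integral m f E
        = (LINT x:(\<Pi>\<^sub>E i\<in>{..<m}. E i) \<inter> near_diagonal m n|unit_cube m. f x)"
      using vanish by (intro box_integral_eq_near_diagonal[OF f n(1) _ E]) (meson order_trans)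
    also have "norm \<dots> \<le> (\<integral>x. norm (f x) * indicator ((\<Pi>\<^sub>E i\<in>{..<m}. E i) \<inter> near_diagonal m n) x
        \<partial>unit_cube m)"
      by (rule norm_set_integral_le)
    also have "\<dots> \<le> (\<integral>x. norm (f x) * indicator (near_diagonal m n) x \<partial>unit_cube m)"
      using box_in_sets_unit_cube[OF E] near_diagonal_in_sets f
      by (intro integral_mono integrable_real_mult_indicator integrable_norm sets.Int)
        (auto simp: indicator_def)
    also have "\<dots> < e"
    proof -
      have "measure (unit_cube m) (near_diagonal m n) \<le> 2 * real m ^ 2 / real n"
        by (rule measure_near_diagonal[OF n(1)])
      also have "\<dots> < d" using n d(1) by (simp add: field_simps)
      finally show ?thesis using d(2) near_diagonal_in_sets by blast
    qed
    finally show ?thesis .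
  qed
  from this[of "norm (box_integral m f E)"] show ?thesis by (cases "box_integral m f E = 0") auto
qed

text \<open>Boxes form an \<open>\<inter>\<close>-stable generator of the product \<open>\<sigma>\<close>-algebra, and the sets \<open>Z\<close> with
  \<open>\<integral>\<^sub>Z f = 0\<close> form a Dynkin system.\<close>
lemma set_integral_vanishes_of_box_integral:
  fixes f :: "(nat \<Rightarrow> real) \<Rightarrow> 'b::{banach, second_countable_topology}"
  assumes f: "integrable (unit_cube m) f"
    and boxes: "\<And>E. E \<in> {..<m} \<rightarrow> sets L01 \<Longrightarrow> box_integral m f E = 0"
    and Z: "Z \<in> sets (unit_cube m)"
  shows "(LINT x:Z|unit_cube m. f x) = 0"
proof -
  let ?\<Omega> = "\<Pi>\<^sub>E i\<in>{..<m}. space L01"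
  have sets_eq: "sets (unit_cube m) = sigma_sets ?\<Omega> (prod_algebra {..<m} (\<lambda>_. L01))"
    unfolding unit_cube_def by (rule sets_PiM)
  have \<Omega>: "?\<Omega> = space (unit_cube m)" by (simp add: space_unit_cube)
  have set_int: "set_integrable (unit_cube m) A f" if "A \<in> sets (unit_cube m)" for A
    using that f by (rule set_integrable_of_integrable)
  from Int_stable_prod_algebra prod_algebra_sets_into_space Z[unfolded sets_eq]
  show ?thesis
  proof (induction rule: sigma_sets_induct_disjoint)
    case (basic A)
    then obtain E where "A = (\<Pi>\<^sub>E i\<in>{..<m}. E i)" "E \<in> (\<Pi> i\<in>{..<m}. sets L01)"
      by (auto simp: prod_algebra_eq_finite)
    then show ?case using boxes by simp
  next
    case empty
    then show ?case by (simp add: set_lebesgue_integral_def)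
  next
    case (compl A)
    then have A: "A \<in> sets (unit_cube m)" using sets_eq by simp
    then have A': "?\<Omega> - A \<in> sets (unit_cube m)" "A \<union> (?\<Omega> - A) = ?\<Omega>"
      using \<Omega> sets.sets_into_space by auto
    have "(LINT x:A \<union> (?\<Omega> - A)|unit_cube m. f x)
        = (LINT x:A|unit_cube m. f x) + (LINT x:?\<Omega> - A|unit_cube m. f x)"
      by (rule set_integral_Un) (use set_int A A' in auto)
    moreover have "(LINT x:?\<Omega>|unit_cube m. f x) = 0"
      using boxes[of "\<lambda>_. {0..1}"] unit_interval_in_sets_L01 by simp
    ultimately show ?case using A'(2) compl.IH by simp
  next
    case (union A)
    have A: "\<And>i. A i \<in> sets (unit_cube m)" using union.hyps(2) sets_eq by auto
    have "(LINT x:(\<Union>i. A i)|unit_cube m. f x) = (\<Sum>i. LINT x:A i|unit_cube m. f x)"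
    proof (rule lebesgue_integral_countable_add[OF A])
      show "\<And>i j. i \<noteq> j \<Longrightarrow> A i \<inter> A j = {}" using union.hyps(1) by (auto simp: disjoint_family_on_def)
      show "set_integrable (unit_cube m) (\<Union>i. A i) f" using A by (intro set_int) auto
    qed
    then show ?case using union.IH by simp
  qed
qed

lemma AE_zero_of_small_boxes:
  fixes f :: "(nat \<Rightarrow> real) \<Rightarrow> 'b::{banach, second_countable_topology}"
  assumes f: "integrable (unit_cube m) f" and \<delta>: "\<delta> > 0"
    and vanish: "\<And>B. B \<in> {..<m} \<rightarrow> sets L01 \<Longrightarrow> disjoint_family_on B {..<m}
      \<Longrightarrow> \<forall>i<m. vol (B i) \<le> \<delta> \<Longrightarrow> box_integral m f B = 0"
  shows "AE x in unit_cube m. f x = 0"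
proof -
  interpret prob_space "unit_cube m" by (rule prob_space_unit_cube)
  show ?thesis
    using f set_integral_vanishes_of_box_integral[OF f box_integral_vanishes[OF f \<delta> vanish]]
    by (rule density_zero)
qed

lemma vanishes_on_disjoint_boxes_if_AE_zero:
  assumes "AE x in unit_cube m. f x = 0"
  shows "vanishes_on_disjoint_boxes m \<alpha> f"
  unfolding vanishes_on_disjoint_boxes_def set_lebesgue_integral_def
  using assms by (auto intro!: integral_eq_zero_AE elim: AE_mp)

lemma vanishes_on_disjoint_boxesD:
  assumes "vanishes_on_disjoint_boxes m \<alpha> f" "A \<in> {..<m} \<rightarrow> sets L01" "disjoint_family_on A {..<m}"
    "\<forall>i<m. vol (A i) = \<alpha> i"
  shows "box_integral m f A = 0"
proof -
  have "(\<forall>i<m. A i \<in> sets L01 \<and> vol (A i) = \<alpha> i) \<and> (\<forall>i<m. \<forall>j<m. i \<noteq> j \<longrightarrow> A i \<inter> A j = {})"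
    using assms(2-4) unfolding disjoint_family_on_def by auto
  then show ?thesis using assms(1) unfolding vanishes_on_disjoint_boxes_def by blast
qed

lemma nonconstant_if_not_uniform:
  fixes \<alpha> :: "nat \<Rightarrow> real"
  assumes less: "\<forall>i<m. \<alpha> i < 1" and sum: "(\<Sum>i<m. \<alpha> i) = 1"
    and not_uniform: "\<exists>i<m. \<alpha> i \<noteq> 1 / real m"
  shows "2 \<le> m" "\<exists>i<m. \<exists>j<m. \<alpha> i \<noteq> \<alpha> j"
proof -
  have "m \<noteq> 0" using sum by (intro notI) simp
  moreover have "m \<noteq> 1"
  proof
    assume "m = 1"
    then have "\<alpha> 0 < 1" using less by simp
    moreover have "\<alpha> 0 = 1" using sum \<open>m = 1\<close> by simp
    ultimately show False by simp
  qed
  ultimately show m: "2 \<le> m" by linarith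
  show "\<exists>i<m. \<exists>j<m. \<alpha> i \<noteq> \<alpha> j"
  proof (rule ccontr)
    assume "\<not> (\<exists>i<m. \<exists>j<m. \<alpha> i \<noteq> \<alpha> j)"
    moreover have "0 < m" using m by simp
    ultimately have const: "\<alpha> i = \<alpha> 0" if "i < m" for i using that by blast
    have "(\<Sum>i<m. \<alpha> i) = (\<Sum>i<m. \<alpha> 0)" by (intro sum.cong refl const) simp
    then have "real m * \<alpha> 0 = 1" using sum by simp
    then have "\<alpha> 0 = 1 / real m" using m by (simp add: eq_divide_eq mult.commute)
    moreover obtain i where "i < m" "\<alpha> i \<noteq> 1 / real m" using not_uniform by blast
    ultimately show False using const[of i] by simp
  qed
qed

theorem vanishes_on_disjoint_boxes_iff_AE_zero:
  assumes \<alpha>: "\<forall>i<m. 0 < \<alpha> i" "(\<Sum>i<m. \<alpha> i) < 1" and f: "integrable (unit_cube m) f"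
  shows "vanishes_on_disjoint_boxes m \<alpha> f \<longleftrightarrow> (AE x in unit_cube m. f x = 0)"
proof
  assume vanish: "vanishes_on_disjoint_boxes m \<alpha> f"
  obtain \<delta> where "\<delta> > 0" "\<And>B. B \<in> {..<m} \<rightarrow> sets L01 \<Longrightarrow> disjoint_family_on B {..<m}
      \<Longrightarrow> \<forall>i<m. vol (B i) \<le> \<delta> \<Longrightarrow> box_integral m f B = 0"
    by (rule box_function.small_boxes_vanish[OF box_function_box_integral[OF f] \<alpha>
          vanishes_on_disjoint_boxesD[OF vanish]]) auto
  then show "AE x in unit_cube m. f x = 0" by (rule AE_zero_of_small_boxes[OF f])
qed (rule vanishes_on_disjoint_boxes_if_AE_zero)

theorem symmetric_vanishes_on_disjoint_boxes_iff_AE_zero: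
  fixes f :: "(nat \<Rightarrow> real) \<Rightarrow> complex"
  assumes \<alpha>: "\<forall>i<m. 0 < \<alpha> i \<and> \<alpha> i < 1" "(\<Sum>i<m. \<alpha> i) = 1" "\<exists>i<m. \<alpha> i \<noteq> 1 / real m"
    and f: "integrable (unit_cube m) f"
    and sym: "\<forall>\<sigma>. \<sigma> permutes {..<m} \<longrightarrow> (\<forall>x\<in>space (unit_cube m). f (x \<circ> \<sigma>) = f x)"
  shows "vanishes_on_disjoint_boxes m \<alpha> f \<longleftrightarrow> (AE x in unit_cube m. f x = 0)"
proof
  assume vanish: "vanishes_on_disjoint_boxes m \<alpha> f"
  have "2 \<le> m" "\<exists>i<m. \<exists>j<m. \<alpha> i \<noteq> \<alpha> j"
    using nonconstant_if_not_uniform[of m \<alpha>] \<alpha> by simp_all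
  then obtain \<delta> where \<delta>: "\<delta> > 0" "forces_small_boxes m \<alpha> \<delta>"
    using exists_forces_small_boxes \<alpha>(1) by blast
  have "box_integral m f B = 0"
    if "B \<in> {..<m} \<rightarrow> sets L01" "disjoint_family_on B {..<m}" "\<forall>i<m. vol (B i) \<le> \<delta>" for B
  proof (rule forces_small_boxesD[OF \<delta>(2) unit_interval_in_sets_L01 _
        symmetric_box_function_box_integral[OF f sym] _ that(1,2)])
    show "vol {0..1} = (\<Sum>i<m. \<alpha> i)" using \<alpha>(2) L01.prob_space by simp
    show "\<forall>i<m. B i \<subseteq> {0..1} \<and> vol (B i) \<le> \<delta>" using that(1,3) sets_L01_subset by auto
  qed (use vanishes_on_disjoint_boxesD[OF vanish] in auto)
  then show "AE x in unit_cube m. f x = 0" by (rule AE_zero_of_small_boxes[OF f \<delta>(1)])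
qed (rule vanishes_on_disjoint_boxes_if_AE_zero)

theorem mainTheorem3:
  fixes m :: nat
  shows "(\<forall>(\<alpha> :: nat \<Rightarrow> real) (f :: (nat \<Rightarrow> real) \<Rightarrow> complex).
            (\<forall>i<m. 0 < \<alpha> i \<and> \<alpha> i < 1) \<and> (\<Sum>i<m. \<alpha> i) < 1 \<and>
            integrable (unit_cube m) f \<longrightarrow>
            (vanishes_on_disjoint_boxes m \<alpha> f \<longleftrightarrow> (AE x in unit_cube m. f x = 0)))
       \<and> (\<forall>(\<alpha> :: nat \<Rightarrow> real) (f :: (nat \<Rightarrow> real) \<Rightarrow> complex).
            (\<forall>i<m. 0 < \<alpha> i \<and> \<alpha> i < 1) \<and> (\<Sum>i<m. \<alpha> i) = 1 \<and>
            (\<exists>i<m. \<alpha> i \<noteq> 1 / real m) \<and>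
            integrable (unit_cube m) f \<and>
            (\<forall>\<sigma>. \<sigma> permutes {..<m} \<longrightarrow> (\<forall>x\<in>space (unit_cube m). f (x \<circ> \<sigma>) = f x)) \<longrightarrow>
            (vanishes_on_disjoint_boxes m \<alpha> f \<longleftrightarrow> (AE x in unit_cube m. f x = 0)))"
proof (intro conjI allI impI)
  fix \<alpha> :: "nat \<Rightarrow> real" and f :: "(nat \<Rightarrow> real) \<Rightarrow> complex"
  assume "(\<forall>i<m. 0 < \<alpha> i \<and> \<alpha> i < 1) \<and> (\<Sum>i<m. \<alpha> i) < 1 \<and> integrable (unit_cube m) f"
  then show "vanishes_on_disjoint_boxes m \<alpha> f \<longleftrightarrow> (AE x in unit_cube m. f x = 0)"
    by (intro vanishes_on_disjoint_boxes_iff_AE_zero) auto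
next
  fix \<alpha> :: "nat \<Rightarrow> real" and f :: "(nat \<Rightarrow> real) \<Rightarrow> complex"
  assume "(\<forall>i<m. 0 < \<alpha> i \<and> \<alpha> i < 1) \<and> (\<Sum>i<m. \<alpha> i) = 1 \<and> (\<exists>i<m. \<alpha> i \<noteq> 1 / real m) \<and>
    integrable (unit_cube m) f \<and>
    (\<forall>\<sigma>. \<sigma> permutes {..<m} \<longrightarrow> (\<forall>x\<in>space (unit_cube m). f (x \<circ> \<sigma>) = f x))"
  then show "vanishes_on_disjoint_boxes m \<alpha> f \<longleftrightarrow> (AE x in unit_cube m. f x = 0)"
    by (intro symmetric_vanishes_on_disjoint_boxes_iff_AE_zero) auto
qed

end
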